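(* Under Assumption (A), for every constant $d>0$ not depending on $n$ there exist $\epsilon_0>0$ and an integer $N$ such that for every $n\ge N$ there is a probability measure $Q_n$ on $\mathcal X$ with $$P(x,\cdot)\ge\epsilon_0\,Q_n(\cdot)\qquad\text{for all }x\in R:=\{x\in\mathcal X: f(x)\le d\},$$ where $P$ is the transition kernel of the Gibbs sampler.
   Context: Fix $V>0$, $a>0$, $b_0>0$. For each $n\ge2$ observed data $Y_1,\dots,Y_n\in\mathbb R$ are given; $\bar Y=\frac1n\sum_iY_i$, $\Delta=\Delta_n=\sum_{i=1}^n(Y_i-\bar Y)^2$. Model: $Y_i\mid\theta_i\sim\mathcal N(\theta_i,V)$, $\theta_i\mid\mu,A\sim\mathcal N(\mu,A)$ independently ($1\le i\le n$), flat prior on $\mu\in\mathbb R$, $A\sim\mathrm{IG}(a,b_0)$ (density $\propto A^{-a-1}e^{-b_0/A}$ on $(0,\infty)$). The posterior $\pi$ on $\mathcal X=(0,\infty)\times\mathbb R\times\mathbb R^n$, $x=(A,\mu,\theta_1,\dots,\theta_n)$, has density $\propto A^{-a-1}e^{-b_0/A}\prod_{i=1}^n A^{-1/2}e^{-(\theta_i-\mu)^2/(2A)}e^{-(Y_i-\theta_i)^2/(2V)}$. Write $\bar\theta=\frac1n\sum_i\theta_i$. The Gibbs sampler $X^{(k)}=(A^{(k)},\mu^{(k)},\theta^{(k)}_1,\dots,\theta^{(k)}_n)$ updates: $\mu^{(k+1)}\sim\mathcal N(\bar\theta^{(k)},A^{(k)}/n)$; then independently $\theta_i^{(k+1)}\sim\mathcal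 N\big(\frac{\mu^{(k+1)}V+Y_iA^{(k)}}{V+A^{(k)}},\frac{A^{(k)}V}{V+A^{(k)}}\big)$, $i=1,\dots,n$; then $A^{(k+1)}\sim\mathrm{IG}\big(a+\frac{n-1}2,\ b_0+\frac12\sum_i(\theta_i^{(k+1)}-\bar\theta^{(k+1)})^2\big)$. Assumption (A): there are $\delta>0$, $M<\infty$ and an integer $N_0$ with $\frac{\Delta_n}{n-1}\le M$ for all $n$ and $\frac{\Delta_n}{n-1}\ge V+\delta$ for all $n\ge N_0$. Drift function: $f(x)=n(\bar\theta-\bar Y)^2+n\big[\big(\frac{\Delta}{n-1}-V\big)-A\big]^2$. *)

theory Defs
  imports "HOL-Probability.Probability"
begin

text \<open>State x = (A, mu, theta), theta :: nat => real, only coordinates i < n matter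
  (extensional on {..<n} in the product measure).\<close>

type_synonym state = "real \<times> real \<times> (nat \<Rightarrow> real)"

definition state_space :: "nat \<Rightarrow> state measure" where
  "state_space n = lborel \<Otimes>\<^sub>M (lborel \<Otimes>\<^sub>M (\<Pi>\<^sub>M i\<in>{..<n}. (lborel :: real measure)))"

definition Xset :: "nat \<Rightarrow> state set" where
  "Xset n = {x \<in> space (state_space n). fst x > 0}"

definition Ybar :: "(nat \<Rightarrow> nat \<Rightarrow> real) \<Rightarrow> nat \<Rightarrow> real" where
  "Ybar Y n = (\<Sum>i<n. Y n i) / real n"

definition Delta :: "(nat \<Rightarrow> nat \<Rightarrow> real) \<Rightarrow> nat \<Rightarrow> real" where
  "Delta Y n = (\<Sum>i<n. (Y n i - Ybar Y n)\<^sup>2)"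

definition thetabar :: "nat \<Rightarrow> (nat \<Rightarrow> real) \<Rightarrow> real" where
  "thetabar n \<theta> = (\<Sum>i<n. \<theta> i) / real n"

definition ig_density :: "real \<Rightarrow> real \<Rightarrow> real \<Rightarrow> real" where
  "ig_density \<alpha> \<beta> t =
     (if t > 0 then \<beta> powr \<alpha> / Gamma \<alpha> * t powr (-\<alpha> - 1) * exp (- \<beta> / t) else 0)"

text \<open>Transition density of the Gibbs sampler from x = (A, mu, theta) to y = (A', mu', theta'):
  mu' ~ N(thetabar, A/n); theta'_i ~ N((mu' V + Y_i A)/(V+A), A V/(V+A)) independently;
  A' ~ IG(a + (n-1)/2, b0 + 1/2 sum (theta'_i - thetabar')^2).
  normal_density takes the standard deviation.\<close>
definition gibbs_density ::
  "real \<Rightarrow> real \<Rightarrow> real \<Rightarrow> (nat \<Rightarrow> nat \<Rightarrow> real) \<Rightarrow> nat \<Rightarrow> state \<Rightarrow> state \<Rightarrow> real" where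
  "gibbs_density V a b0 Y n x y =
     (case x of (A, \<mu>, \<theta>) \<Rightarrow> case y of (A', \<mu>', \<theta>') \<Rightarrow>
        normal_density (thetabar n \<theta>) (sqrt (A / real n)) \<mu>'
        * (\<Prod>i<n. normal_density ((\<mu>' * V + Y n i * A) / (V + A)) (sqrt (A * V / (V + A))) (\<theta>' i))
        * ig_density (a + (real n - 1) / 2) (b0 + (\<Sum>i<n. (\<theta>' i - thetabar n \<theta>')\<^sup>2) / 2) A')"

definition gibbs_kernel ::
  "real \<Rightarrow> real \<Rightarrow> real \<Rightarrow> (nat \<Rightarrow> nat \<Rightarrow> real) \<Rightarrow> nat \<Rightarrow> state \<Rightarrow> state measure" where
  "gibbs_kernel V a b0 Y n x = density (state_space n) (\<lambda>y. ennreal (gibbs_density V a b0 Y n x y))"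

definition drift :: "real \<Rightarrow> (nat \<Rightarrow> nat \<Rightarrow> real) \<Rightarrow> nat \<Rightarrow> state \<Rightarrow> real" where
  "drift V Y n x =
     (case x of (A, \<mu>, \<theta>) \<Rightarrow>
        real n * (thetabar n \<theta> - Ybar Y n)\<^sup>2
        + real n * ((Delta Y n / (real n - 1) - V) - A)\<^sup>2)"

end

theory Submission
  imports Defs
begin

lemma nn_integral_normal_density:
  "0 < \<sigma> \<Longrightarrow> (\<integral>\<^sup>+x. ennreal (normal_density \<mu> \<sigma> x) \<partial>lborel) = 1"
  using prob_space.emeasure_space_1[OF prob_space_normal_density, of \<sigma> \<mu>]
  by (simp add: emeasure_density)

lemma nn_integral_normal_density_exp_linear:
  assumes "0 < \<sigma>"
  shows "(\<integral>\<^sup>+x. ennreal (normal_density \<mu> \<sigma> x * exp (c * (x - \<mu>))) \<partial>lborel)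
       = ennreal (exp (c\<^sup>2 * \<sigma>\<^sup>2 / 2))"
proof -
  have "normal_density \<mu> \<sigma> x * exp (c * (x - \<mu>))
      = exp (c\<^sup>2 * \<sigma>\<^sup>2 / 2) * normal_density (\<mu> + c * \<sigma>\<^sup>2) \<sigma> x" for x
  proof -
    have "- (x - \<mu>)\<^sup>2 / (2 * \<sigma>\<^sup>2) + c * (x - \<mu>)
        = c\<^sup>2 * \<sigma>\<^sup>2 / 2 - (x - (\<mu> + c * \<sigma>\<^sup>2))\<^sup>2 / (2 * \<sigma>\<^sup>2)"
      using assms by (simp add: field_simps power2_eq_square)
    then show ?thesis
      unfolding normal_density_def by (simp add: mult_ac flip: exp_add)
  qed
  then show ?thesis
    using assms by (simp add: ennreal_mult nn_integral_cmult nn_integral_normal_density)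
qed

lemma nn_integral_normal_density_exp_square:
  assumes "0 < \<sigma>" "2 * c * \<sigma>\<^sup>2 < 1"
  shows "(\<integral>\<^sup>+x. ennreal (normal_density \<mu> \<sigma> x * exp (c * (x - \<mu>)\<^sup>2)) \<partial>lborel)
       = ennreal (1 / sqrt (1 - 2 * c * \<sigma>\<^sup>2))"
proof -
  define r where "r = 1 - 2 * c * \<sigma>\<^sup>2"
  have r: "r > 0" using assms by (simp add: r_def)
  have eq: "normal_density \<mu> \<sigma> x * exp (c * (x - \<mu>)\<^sup>2)
      = 1 / sqrt r * normal_density \<mu> (\<sigma> / sqrt r) x" for x
  proof -
    have "- (x - \<mu>)\<^sup>2 / (2 * \<sigma>\<^sup>2) + c * (x - \<mu>)\<^sup>2 = - (x - \<mu>)\<^sup>2 / (2 * (\<sigma> / sqrt r)\<^sup>2)"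
      using assms r by (simp add: field_simps power2_eq_square r_def)
    moreover have "1 / sqrt (2 * pi * \<sigma>\<^sup>2) = 1 / sqrt r * (1 / sqrt (2 * pi * (\<sigma> / sqrt r)\<^sup>2))"
      using assms r by (simp add: power_divide real_sqrt_divide real_sqrt_mult field_simps)
    ultimately show ?thesis
      unfolding normal_density_def by (simp add: mult_ac flip: exp_add)
  qed
  have "(\<integral>\<^sup>+x. ennreal (normal_density \<mu> \<sigma> x * exp (c * (x - \<mu>)\<^sup>2)) \<partial>lborel)
      = (\<integral>\<^sup>+x. ennreal (1 / sqrt r) * ennreal (normal_density \<mu> (\<sigma> / sqrt r) x) \<partial>lborel)"
    by (intro nn_integral_cong, subst eq, subst ennreal_mult) (use r in auto)
  then show ?thesis
    using assms r by (simp add: nn_integral_cmult nn_integral_normal_density r_def)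
qed

lemma normal_density_ratio:
  assumes "s > 0" "s0 > 0"
  shows "normal_density m s t
       = normal_density m0 s0 t * exp (ln (s0 / s) - (t - m)\<^sup>2 / (2 * s\<^sup>2) + (t - m0)\<^sup>2 / (2 * s0\<^sup>2))"
proof -
  have "exp (ln (s0 / s) - (t - m)\<^sup>2 / (2 * s\<^sup>2) + (t - m0)\<^sup>2 / (2 * s0\<^sup>2))
      = exp (ln (s0 / s)) * exp (- ((t - m)\<^sup>2 / (2 * s\<^sup>2))) * exp ((t - m0)\<^sup>2 / (2 * s0\<^sup>2))"
    by (simp flip: exp_add)
  also have "\<dots> = s0 / s * exp (- ((t - m)\<^sup>2 / (2 * s\<^sup>2))) * exp ((t - m0)\<^sup>2 / (2 * s0\<^sup>2))"
    using assms by simp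
  finally have e: "exp (ln (s0 / s) - (t - m)\<^sup>2 / (2 * s\<^sup>2) + (t - m0)\<^sup>2 / (2 * s0\<^sup>2)) = \<dots>" .
  have s: "sqrt (2 * pi * s\<^sup>2) = sqrt (2 * pi) * s" "sqrt (2 * pi * s0\<^sup>2) = sqrt (2 * pi) * s0"
    using assms by (simp_all add: real_sqrt_mult)
  have "exp (- (t - m0)\<^sup>2 / (2 * s0\<^sup>2)) * exp ((t - m0)\<^sup>2 / (2 * s0\<^sup>2)) = 1"
    by (simp flip: exp_add)
  then show ?thesis
    using assms unfolding normal_density_def e s by (simp add: field_simps)
qed

abbreviation theta_space :: "nat \<Rightarrow> (nat \<Rightarrow> real) measure" where
  "theta_space n \<equiv> \<Pi>\<^sub>M i\<in>{..<n}. lborel"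

interpretation lborel_product: product_sigma_finite "\<lambda>_::nat. lborel :: real measure"
  by (simp add: product_sigma_finite_def lborel.sigma_finite_measure_axioms)

lemma nn_integral_theta_space_prod:
  assumes "\<And>i. i < n \<Longrightarrow> f i \<in> borel_measurable borel" "\<And>i x. i < n \<Longrightarrow> 0 \<le> f i x"
  shows "(\<integral>\<^sup>+\<theta>. ennreal (\<Prod>i<n. f i (\<theta> i)) \<partial>theta_space n) = (\<Prod>i<n. \<integral>\<^sup>+t. ennreal (f i t) \<partial>lborel)"
proof -
  have "(\<integral>\<^sup>+\<theta>. ennreal (\<Prod>i<n. f i (\<theta> i)) \<partial>theta_space n)
      = (\<integral>\<^sup>+\<theta>. (\<Prod>i<n. ennreal (f i (\<theta> i))) \<partial>theta_space n)"
    using assms(2) by (intro nn_integral_cong, subst prod_ennreal) auto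
  also have "\<dots> = (\<Prod>i<n. \<integral>\<^sup>+t. ennreal (f i t) \<partial>lborel)"
    using assms(1) by (intro lborel_product.product_nn_integral_prod) auto
  finally show ?thesis .
qed

lemma nn_integral_prod_normal_density:
  assumes "s > 0"
  shows "(\<integral>\<^sup>+\<theta>. ennreal (\<Prod>i<n. normal_density (m i) s (\<theta> i)) \<partial>theta_space n) = 1"
  using assms by (subst nn_integral_theta_space_prod) (auto simp: nn_integral_normal_density)


lemma ig_density_measurable [measurable (raw)]:
  assumes [measurable]: "f \<in> borel_measurable M" "g \<in> borel_measurable M"
  shows "(\<lambda>x. ig_density \<alpha> (f x) (g x)) \<in> borel_measurable M"
  unfolding ig_density_def by measurable

lemma ig_density_nonneg: "\<alpha> > 0 \<Longrightarrow> 0 \<le> ig_density \<alpha> \<beta> t"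
  unfolding ig_density_def using Gamma_real_pos[of \<alpha>] by auto

lemma ig_density_inverse_substitution:
  assumes "\<alpha> > 0" "\<beta> > 0" "s > 0"
  shows "\<beta> / s\<^sup>2 * ig_density \<alpha> \<beta> (\<beta> / s) = s powr (\<alpha> - 1) / exp s / Gamma \<alpha>"
proof -
  have "\<beta> powr \<alpha> * (\<beta> / s) powr (- \<alpha> - 1) * (\<beta> / s\<^sup>2) = s powr (\<alpha> - 1)"
    using assms by (simp add: powr_diff powr_minus powr_divide field_simps power2_eq_square)
  then show ?thesis
    using assms unfolding ig_density_def by (simp add: exp_minus field_simps)
qed

lemma nn_integral_ig_density:
  assumes "\<alpha> > 0" "\<beta> > 0"
  shows "(\<integral>\<^sup>+t. ennreal (ig_density \<alpha> \<beta> t) \<partial>lborel) = 1"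
proof -
  let ?f = "ig_density \<alpha> \<beta>" and ?g = "\<lambda>s::real. \<beta> / s" and ?g' = "\<lambda>s::real. - (\<beta> / s\<^sup>2)"
  have "((\<lambda>s. s powr (\<alpha> - 1) / exp s / Gamma \<alpha>) has_integral 1) {0..}"
    using has_integral_divide[OF Gamma_integral_real[OF assms(1)], of "Gamma \<alpha>"]
      Gamma_real_pos[OF assms(1)] by simp
  then have "((\<lambda>s. if s \<in> {0<..} then s powr (\<alpha> - 1) / exp s / Gamma \<alpha> else 0) has_integral 1) {0..}"
    by (rule has_integral_spike[of "{0}", rotated 2]) auto
  then have "((\<lambda>s. s powr (\<alpha> - 1) / exp s / Gamma \<alpha>) has_integral 1) {0<..}"
    by (subst (asm) has_integral_restrict) auto
  then have subst: "((\<lambda>s. \<bar>?g' s\<bar> * ?f (?g s)) has_integral 1) {0<..}"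
    by (rule has_integral_eq[rotated]) (use assms ig_density_inverse_substitution in auto)
  have "?f absolutely_integrable_on (?g ` {0<..}) \<and> integral (?g ` {0<..}) ?f = 1"
  proof (rule has_absolute_integral_change_of_variables_1'[THEN iffD1])
    show "(?g has_field_derivative ?g' s) (at s within {0<..})" if "s \<in> {0<..}" for s
      using that by (auto intro!: derivative_eq_intros simp: power2_eq_square)
    show "inj_on ?g {0<..}"
      using assms by (auto simp: inj_on_def field_simps)
    show "(\<lambda>s. \<bar>?g' s\<bar> * ?f (?g s)) absolutely_integrable_on {0<..} \<and>
          integral {0<..} (\<lambda>s. \<bar>?g' s\<bar> * ?f (?g s)) = 1"
      using subst assms ig_density_nonneg[OF assms(1)]
      by (auto intro!: nonnegative_absolutely_integrable_1 simp: has_integral_integrable integral_unique)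
  qed auto
  moreover have "?g ` {0<..} = {0<..}"
  proof (intro equalityI subsetI)
    fix t :: real assume "t \<in> {0<..}"
    then show "t \<in> ?g ` {0<..}"
      using assms by (intro image_eqI[of _ _ "\<beta> / t"]) auto
  qed (use assms in auto)
  ultimately have "(?f has_integral 1) {0<..}"
    by (metis has_integral_integral set_lebesgue_integral_eq_integral(1))
  then have "(\<integral>\<^sup>+t. ennreal (?f t) * indicator {0<..} t \<partial>lborel) = 1"
    using ig_density_nonneg[OF assms(1)] by (subst nn_integral_has_integral_lebesgue') auto
  moreover have "ennreal (?f t) * indicator {0<..} t = ennreal (?f t)" for t
    by (simp add: ig_density_def indicator_def)
  ultimately show ?thesis by simp
qed

definition cond_mean :: "real \<Rightarrow> (nat \<Rightarrow> nat \<Rightarrow> real) \<Rightarrow> nat \<Rightarrow> real \<Rightarrow> nat \<Rightarrow> real \<Rightarrow> real" where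
  "cond_mean V Y n A i \<mu>' = (\<mu>' * V + Y n i * A) / (V + A)"

definition cond_sd :: "real \<Rightarrow> real \<Rightarrow> real" where
  "cond_sd V A = sqrt (A * V / (V + A))"

definition ig_scale :: "real \<Rightarrow> nat \<Rightarrow> (nat \<Rightarrow> real) \<Rightarrow> real" where
  "ig_scale b0 n \<theta>' = b0 + (\<Sum>i<n. (\<theta>' i - thetabar n \<theta>')\<^sup>2) / 2"

definition mu_theta_density :: "real \<Rightarrow> (nat \<Rightarrow> nat \<Rightarrow> real) \<Rightarrow> nat \<Rightarrow> state \<Rightarrow> real \<times> (nat \<Rightarrow> real) \<Rightarrow> real" where
  "mu_theta_density V Y n x z = (case x of (A, \<mu>, \<theta>) \<Rightarrow>
     normal_density (thetabar n \<theta>) (sqrt (A / real n)) (fst z)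
     * (\<Prod>i<n. normal_density (cond_mean V Y n A i (fst z)) (cond_sd V A) (snd z i)))"

lemma cond_sd_pos: "V > 0 \<Longrightarrow> A > 0 \<Longrightarrow> cond_sd V A > 0"
  unfolding cond_sd_def by simp

lemma cond_sd_sq: "V > 0 \<Longrightarrow> A > 0 \<Longrightarrow> (cond_sd V A)\<^sup>2 = A * V / (V + A)"
  unfolding cond_sd_def by simp

lemma ig_scale_pos: "b0 > 0 \<Longrightarrow> ig_scale b0 n \<theta>' > 0"
  unfolding ig_scale_def by (simp add: add_pos_nonneg sum_nonneg)

lemma gibbs_density_factor:
  "gibbs_density V a b0 Y n x (A', z)
     = mu_theta_density V Y n x z * ig_density (a + (real n - 1) / 2) (ig_scale b0 n (snd z)) A'"
  unfolding gibbs_density_def mu_theta_density_def cond_mean_def cond_sd_def ig_scale_def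
  by (cases x; cases z) auto

lemma mu_theta_density_measurable [measurable]:
  "mu_theta_density V Y n x \<in> borel_measurable (lborel \<Otimes>\<^sub>M theta_space n)"
  unfolding mu_theta_density_def cond_mean_def normal_density_def by (cases x) simp

lemma mu_theta_density_nonneg: "0 \<le> mu_theta_density V Y n x z"
  unfolding mu_theta_density_def by (cases x) (auto intro!: mult_nonneg_nonneg prod_nonneg)

lemma gibbs_density_measurable [measurable]:
  "gibbs_density V a b0 Y n x \<in> borel_measurable (state_space n)"
proof -
  have [measurable]: "(\<lambda>z. ig_scale b0 n (snd z)) \<in> borel_measurable (lborel \<Otimes>\<^sub>M theta_space n)"
    unfolding ig_scale_def thetabar_def by measurable
  have eq: "gibbs_density V a b0 Y n x = (\<lambda>y. mu_theta_density V Y n x (snd y)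
      * ig_density (a + (real n - 1) / 2) (ig_scale b0 n (snd (snd y))) (fst y))"
    by (auto simp: gibbs_density_factor[symmetric])
  show ?thesis
    unfolding eq state_space_def by measurable
qed

lemma ig_shape_pos: "a > 0 \<Longrightarrow> n \<ge> 1 \<Longrightarrow> a + (real n - 1) / 2 > 0"
  by (simp add: add_pos_nonneg)

lemma gibbs_density_nonneg: "a > 0 \<Longrightarrow> n \<ge> 1 \<Longrightarrow> 0 \<le> gibbs_density V a b0 Y n x y"
  using gibbs_density_factor[of V a b0 Y n x "fst y" "snd y"]
  by (simp add: mu_theta_density_nonneg ig_density_nonneg ig_shape_pos)

lemma gibbs_density_eq_0: "fst y \<le> 0 \<Longrightarrow> gibbs_density V a b0 Y n x y = 0"
  using gibbs_density_factor[of V a b0 Y n x "fst y" "snd y"] by (simp add: ig_density_def)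

lemma sigma_finite_theta_pair: "sigma_finite_measure (lborel \<Otimes>\<^sub>M theta_space n)"
  by (intro sigma_finite_pair_measure lborel.sigma_finite_measure_axioms lborel_product.sigma_finite) simp

lemma nn_integral_gibbs_density_snd:
  fixes F :: "real \<times> (nat \<Rightarrow> real) \<Rightarrow> ennreal"
  assumes [measurable]: "F \<in> borel_measurable (lborel \<Otimes>\<^sub>M theta_space n)"
    and "a > 0" "b0 > 0" "n \<ge> 1"
  shows "(\<integral>\<^sup>+y. ennreal (gibbs_density V a b0 Y n x y) * F (snd y) \<partial>state_space n)
       = (\<integral>\<^sup>+z. ennreal (mu_theta_density V Y n x z) * F z \<partial>(lborel \<Otimes>\<^sub>M theta_space n))"
proof -
  interpret pair_sigma_finite lborel "lborel \<Otimes>\<^sub>M theta_space n"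
    by (simp add: pair_sigma_finite_def lborel.sigma_finite_measure_axioms sigma_finite_theta_pair)
  have "(\<integral>\<^sup>+y. ennreal (gibbs_density V a b0 Y n x y) * F (snd y) \<partial>state_space n)
      = (\<integral>\<^sup>+z. \<integral>\<^sup>+A'. ennreal (gibbs_density V a b0 Y n x (A', z)) * F z \<partial>lborel
           \<partial>(lborel \<Otimes>\<^sub>M theta_space n))"
  proof -
    have "(\<lambda>y. ennreal (gibbs_density V a b0 Y n x y) * F (snd y))
        \<in> borel_measurable (lborel \<Otimes>\<^sub>M (lborel \<Otimes>\<^sub>M theta_space n))"
      using gibbs_density_measurable unfolding state_space_def by measurable
    from nn_integral_snd[OF this] show ?thesis
      by (simp add: state_space_def)
  qed
  also have "\<dots> = (\<integral>\<^sup>+z. ennreal (mu_theta_density V Y n x z) * F z \<partial>(lborel \<Otimes>\<^sub>M theta_space n))"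
  proof (rule nn_integral_cong)
    fix z :: "real \<times> (nat \<Rightarrow> real)"
    let ?ig = "ig_density (a + (real n - 1) / 2) (ig_scale b0 n (snd z))"
    have "(\<integral>\<^sup>+A'. ennreal (gibbs_density V a b0 Y n x (A', z)) * F z \<partial>lborel)
        = (\<integral>\<^sup>+A'. ennreal (?ig A') \<partial>lborel) * (ennreal (mu_theta_density V Y n x z) * F z)"
      using assms(2,4) ig_density_nonneg[OF ig_shape_pos]
      by (subst nn_integral_multc[symmetric])
         (auto simp: gibbs_density_factor ennreal_mult mu_theta_density_nonneg mult_ac)
    then show "(\<integral>\<^sup>+A'. ennreal (gibbs_density V a b0 Y n x (A', z)) * F z \<partial>lborel)
        = ennreal (mu_theta_density V Y n x z) * F z"
      using assms(2-4) by (simp add: nn_integral_ig_density ig_shape_pos ig_scale_pos)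
  qed
  finally show ?thesis .
qed

lemma nn_integral_mu_theta_density:
  fixes F :: "real \<times> (nat \<Rightarrow> real) \<Rightarrow> ennreal"
  assumes [measurable]: "F \<in> borel_measurable (lborel \<Otimes>\<^sub>M theta_space n)"
  shows "(\<integral>\<^sup>+z. ennreal (mu_theta_density V Y n (A, \<mu>, \<theta>) z) * F z \<partial>(lborel \<Otimes>\<^sub>M theta_space n))
       = (\<integral>\<^sup>+\<mu>'. ennreal (normal_density (thetabar n \<theta>) (sqrt (A / real n)) \<mu>')
            * (\<integral>\<^sup>+\<theta>'. ennreal (\<Prod>i<n. normal_density (cond_mean V Y n A i \<mu>') (cond_sd V A) (\<theta>' i))
                  * F (\<mu>', \<theta>') \<partial>theta_space n) \<partial>lborel)" (is "_ = ?rhs")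
proof -
  interpret sigma_finite_measure "theta_space n"
    by (rule lborel_product.sigma_finite) simp
  have [measurable]: "(\<lambda>\<theta>'. \<Prod>i<n. normal_density (cond_mean V Y n A i \<mu>') (cond_sd V A) (\<theta>' i))
      \<in> borel_measurable (theta_space n)" for \<mu>'
    unfolding normal_density_def by measurable
  have "(\<integral>\<^sup>+z. ennreal (mu_theta_density V Y n (A, \<mu>, \<theta>) z) * F z \<partial>(lborel \<Otimes>\<^sub>M theta_space n))
      = (\<integral>\<^sup>+\<mu>'. \<integral>\<^sup>+\<theta>'. ennreal (mu_theta_density V Y n (A, \<mu>, \<theta>) (\<mu>', \<theta>')) * F (\<mu>', \<theta>')
           \<partial>theta_space n \<partial>lborel)"
    by (subst nn_integral_fst) auto
  also have "\<dots> = ?rhs"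
    by (intro nn_integral_cong, subst nn_integral_cmult[symmetric])
       (auto simp: mu_theta_density_def ennreal_mult prod_nonneg mult_ac)
  finally show ?thesis .
qed

lemma nn_integral_mu_theta_density_le:
  fixes F :: "real \<times> (nat \<Rightarrow> real) \<Rightarrow> ennreal"
  assumes [measurable]: "F \<in> borel_measurable (lborel \<Otimes>\<^sub>M theta_space n)" and "A > 0" "n \<ge> 1"
    and inner: "\<And>\<mu>'. (\<integral>\<^sup>+\<theta>'. ennreal (\<Prod>i<n. normal_density (cond_mean V Y n A i \<mu>') (cond_sd V A) (\<theta>' i))
                  * F (\<mu>', \<theta>') \<partial>theta_space n) \<le> B"
  shows "(\<integral>\<^sup>+z. ennreal (mu_theta_density V Y n (A, \<mu>, \<theta>) z) * F z \<partial>(lborel \<Otimes>\<^sub>M theta_space n)) \<le> B"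
proof -
  have "(\<integral>\<^sup>+z. ennreal (mu_theta_density V Y n (A, \<mu>, \<theta>) z) * F z \<partial>(lborel \<Otimes>\<^sub>M theta_space n))
      \<le> (\<integral>\<^sup>+\<mu>'. ennreal (normal_density (thetabar n \<theta>) (sqrt (A / real n)) \<mu>') * B \<partial>lborel)"
    unfolding nn_integral_mu_theta_density[OF assms(1)]
    by (intro nn_integral_mono mult_left_mono inner) auto
  also have "\<dots> = B"
    using assms(2,3) by (subst nn_integral_multc) (auto simp: nn_integral_normal_density)
  finally show ?thesis .
qed

lemma nn_integral_mu_theta_density_fst:
  fixes f :: "real \<Rightarrow> ennreal"
  assumes [measurable]: "f \<in> borel_measurable borel" and "V > 0" "A > 0"
  shows "(\<integral>\<^sup>+z. ennreal (mu_theta_density V Y n (A, \<mu>, \<theta>) z) * f (fst z) \<partial>(lborel \<Otimes>\<^sub>M theta_space n))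
       = (\<integral>\<^sup>+\<mu>'. ennreal (normal_density (thetabar n \<theta>) (sqrt (A / real n)) \<mu>') * f \<mu>' \<partial>lborel)"
proof -
  have [measurable]: "(\<lambda>\<theta>'. \<Prod>i<n. normal_density (cond_mean V Y n A i \<mu>') (cond_sd V A) (\<theta>' i))
      \<in> borel_measurable (theta_space n)" for \<mu>'
    unfolding normal_density_def by measurable
  have "(\<integral>\<^sup>+\<theta>'. ennreal (\<Prod>i<n. normal_density (cond_mean V Y n A i \<mu>') (cond_sd V A) (\<theta>' i))
           * f \<mu>' \<partial>theta_space n) = f \<mu>'" for \<mu>'
    using assms(2,3)
    by (subst nn_integral_multc) (auto simp: nn_integral_prod_normal_density cond_sd_pos)
  then show ?thesis
    by (simp add: nn_integral_mu_theta_density)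
qed

lemma nn_integral_abs_tail_le:
  fixes p Z :: "'a \<Rightarrow> real"
  assumes [measurable]: "p \<in> borel_measurable M" "Z \<in> borel_measurable M"
    and "\<And>z. 0 \<le> p z" "0 \<le> K"
    and moments: "\<And>\<sigma>. \<bar>\<sigma>\<bar> = 1 \<Longrightarrow> (\<integral>\<^sup>+z. ennreal (p z) * ennreal (exp (\<sigma> * Z z)) \<partial>M) \<le> ennreal E"
  shows "(\<integral>\<^sup>+z. ennreal (p z) * indicator {z. K < \<bar>Z z\<bar>} z \<partial>M) \<le> ennreal (2 * exp (- K) * E)"
proof -
  have tail: "indicator {z. K < \<bar>Z z\<bar>} z \<le> ennreal (exp (- K)) * (ennreal (exp (Z z)) + ennreal (exp (- Z z)))"
    for z
  proof (cases "K < \<bar>Z z\<bar>")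
    case True
    then have "exp K \<le> exp (Z z) + exp (- Z z)"
      by (cases "Z z \<ge> 0") (auto intro: add_increasing add_increasing2)
    then have "1 \<le> exp (- K) * (exp (Z z) + exp (- Z z))"
      by (simp add: exp_minus field_simps)
    then have "ennreal 1 \<le> ennreal (exp (- K) * (exp (Z z) + exp (- Z z)))"
      by (rule ennreal_leI)
    with True show ?thesis
      by (simp add: ennreal_mult ennreal_plus)
  qed simp
  have "(\<integral>\<^sup>+z. ennreal (p z) * indicator {z. K < \<bar>Z z\<bar>} z \<partial>M)
      \<le> (\<integral>\<^sup>+z. ennreal (exp (- K)) * (ennreal (p z) * ennreal (exp (1 * Z z))
                                      + ennreal (p z) * ennreal (exp (- 1 * Z z))) \<partial>M)"
    by (intro nn_integral_mono) (use mult_left_mono[OF tail] in \<open>simp add: distrib_left mult_ac\<close>)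
  also have "\<dots> = ennreal (exp (- K)) * ((\<integral>\<^sup>+z. ennreal (p z) * ennreal (exp (1 * Z z)) \<partial>M)
                                    + (\<integral>\<^sup>+z. ennreal (p z) * ennreal (exp (- 1 * Z z)) \<partial>M))"
    by (simp add: nn_integral_cmult nn_integral_add)
  also have "\<dots> \<le> ennreal (exp (- K)) * (ennreal E + ennreal E)"
    by (intro mult_left_mono add_mono moments) auto
  also have "\<dots> = ennreal (2 * exp (- K) * E)"
    by (cases "E \<ge> 0")
       (simp_all add: ennreal_mult' ennreal_plus[symmetric] ennreal_neg mult_ac mult_nonpos_nonneg)
  finally show ?thesis .
qed

lemma nn_integral_prod_normal_density_exp_linear:
  assumes "s > 0"
  shows "(\<integral>\<^sup>+\<theta>. ennreal ((\<Prod>i<n. normal_density (m i) s (\<theta> i)) * exp (\<Sum>i<n. c i * (\<theta> i - m i)))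
            \<partial>theta_space n)
       = ennreal (exp (s\<^sup>2 * (\<Sum>i<n. (c i)\<^sup>2) / 2))"
proof -
  have "(\<Prod>i<n. normal_density (m i) s (\<theta> i)) * exp (\<Sum>i<n. c i * (\<theta> i - m i))
      = (\<Prod>i<n. normal_density (m i) s (\<theta> i) * exp (c i * (\<theta> i - m i)))" for \<theta>
    by (simp add: exp_sum prod.distrib)
  then have "(\<integral>\<^sup>+\<theta>. ennreal ((\<Prod>i<n. normal_density (m i) s (\<theta> i)) * exp (\<Sum>i<n. c i * (\<theta> i - m i)))
            \<partial>theta_space n)
      = (\<Prod>i<n. \<integral>\<^sup>+t. ennreal (normal_density (m i) s t * exp (c i * (t - m i))) \<partial>lborel)"
    by (simp only:) (rule nn_integral_theta_space_prod; simp)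
  also have "\<dots> = (\<Prod>i<n. ennreal (exp ((c i)\<^sup>2 * s\<^sup>2 / 2)))"
    using assms by (simp add: nn_integral_normal_density_exp_linear)
  also have "\<dots> = ennreal (exp (s\<^sup>2 * (\<Sum>i<n. (c i)\<^sup>2) / 2))"
    by (simp add: prod_ennreal exp_sum sum_distrib_left sum_divide_distrib mult_ac)
  finally show ?thesis .
qed

lemma nn_integral_prod_normal_density_exp_square:
  assumes "s > 0" "2 * c * s\<^sup>2 < 1"
  shows "(\<integral>\<^sup>+\<theta>. ennreal ((\<Prod>i<n. normal_density (m i) s (\<theta> i)) * exp (c * (\<Sum>i<n. (\<theta> i - m i)\<^sup>2 - s\<^sup>2)))
            \<partial>theta_space n)
       = ennreal ((exp (- (c * s\<^sup>2)) / sqrt (1 - 2 * c * s\<^sup>2)) ^ n)"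
proof -
  have "(\<Prod>i<n. normal_density (m i) s (\<theta> i)) * exp (c * (\<Sum>i<n. (\<theta> i - m i)\<^sup>2 - s\<^sup>2))
      = (\<Prod>i<n. normal_density (m i) s (\<theta> i) * exp (c * (\<theta> i - m i)\<^sup>2) * exp (- (c * s\<^sup>2)))" for \<theta>
    by (simp add: sum_distrib_left right_diff_distrib exp_sum exp_diff exp_minus prod.distrib
        prod_dividef divide_inverse mult_ac)
  then have "(\<integral>\<^sup>+\<theta>. ennreal ((\<Prod>i<n. normal_density (m i) s (\<theta> i)) * exp (c * (\<Sum>i<n. (\<theta> i - m i)\<^sup>2 - s\<^sup>2)))
            \<partial>theta_space n)
      = (\<Prod>i<n. \<integral>\<^sup>+t. ennreal (normal_density (m i) s t * exp (c * (t - m i)\<^sup>2)) * ennreal (exp (- (c * s\<^sup>2)))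
            \<partial>lborel)"
    by (simp only:, subst nn_integral_theta_space_prod) (simp_all add: ennreal_mult)
  also have "\<dots> = (\<Prod>i<n. ennreal (exp (- (c * s\<^sup>2)) / sqrt (1 - 2 * c * s\<^sup>2)))"
  proof (intro prod.cong refl)
    fix i
    show "(\<integral>\<^sup>+t. ennreal (normal_density (m i) s t * exp (c * (t - m i)\<^sup>2)) * ennreal (exp (- (c * s\<^sup>2)))
            \<partial>lborel) = ennreal (exp (- (c * s\<^sup>2)) / sqrt (1 - 2 * c * s\<^sup>2))"
      using assms by (subst nn_integral_multc)
        (simp_all add: nn_integral_normal_density_exp_square divide_inverse mult.commute flip: ennreal_mult)
  qed
  finally show ?thesis
    using assms by (simp add: ennreal_power)
qed

lemma exp_div_sqrt_one_minus_le:
  fixes x :: real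
  assumes "\<bar>x\<bar> \<le> 1 / 2"
  shows "exp (- (x / 2)) / sqrt (1 - x) \<le> exp (x\<^sup>2)"
proof -
  have "\<bar>ln (1 + - x) - - x\<bar> \<le> 2 * (- x)\<^sup>2"
    using assms by (intro abs_ln_one_plus_x_minus_x_bound) simp
  then have "- ln (1 - x) \<le> x + 2 * x\<^sup>2"
    by (simp add: abs_le_iff)
  moreover have "sqrt (1 - x) = exp (ln (1 - x) / 2)"
    using assms by (simp add: powr_half_sqrt[symmetric] powr_def)
  ultimately show ?thesis
    by (simp add: exp_diff[symmetric])
qed

abbreviation centre_state :: "(nat \<Rightarrow> nat \<Rightarrow> real) \<Rightarrow> nat \<Rightarrow> real \<Rightarrow> state" where
  "centre_state Y n A0 \<equiv> (A0, 0, \<lambda>_. Ybar Y n)"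

lemma thetabar_const: "n \<ge> 1 \<Longrightarrow> thetabar n (\<lambda>_. c) = c"
  unfolding thetabar_def by simp

lemma sum_sq_dev_eq:
  assumes "n \<ge> 1"
  shows "(\<Sum>i<n. (Y n i - c)\<^sup>2) = Delta Y n + real n * (Ybar Y n - c)\<^sup>2"
proof -
  have "(\<Sum>i<n. (Y n i - Ybar Y n) * (Ybar Y n - c)) = 0"
    using assms by (simp add: sum_distrib_right[symmetric] sum_subtractf Ybar_def)
  then show ?thesis
    unfolding Delta_def
    by (simp add: power2_eq_square algebra_simps sum.distrib sum_distrib_left[symmetric]
        sum_subtractf)
qed

lemma sum_sq_dev_le:
  assumes "n \<ge> 1" "Delta Y n \<le> real n * M" "real n * (c - Ybar Y n)\<^sup>2 \<le> K\<^sup>2"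
  shows "(\<Sum>i<n. (Y n i - c)\<^sup>2) \<le> real n * (M + K\<^sup>2)"
proof -
  have "K\<^sup>2 \<le> real n * K\<^sup>2"
    using assms(1) mult_right_mono[of 1 "real n" "K\<^sup>2"] by simp
  then show ?thesis
    using assms by (simp add: sum_sq_dev_eq power2_commute[of "Ybar Y n"] distrib_left)
qed

definition cross_stat :: "real \<Rightarrow> (nat \<Rightarrow> nat \<Rightarrow> real) \<Rightarrow> nat \<Rightarrow> real \<Rightarrow> real \<times> (nat \<Rightarrow> real) \<Rightarrow> real" where
  "cross_stat V Y n A0 z = (\<Sum>i<n. (snd z i - cond_mean V Y n A0 i (fst z)) * (Y n i - fst z))"

definition sqdev_stat :: "real \<Rightarrow> (nat \<Rightarrow> nat \<Rightarrow> real) \<Rightarrow> nat \<Rightarrow> real \<Rightarrow> real \<times> (nat \<Rightarrow> real) \<Rightarrow> real" where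
  "sqdev_stat V Y n A0 z = (\<Sum>i<n. (snd z i - cond_mean V Y n A0 i (fst z))\<^sup>2 - (cond_sd V A0)\<^sup>2)"

lemma cross_stat_measurable [measurable]:
  "cross_stat V Y n A0 \<in> borel_measurable (lborel \<Otimes>\<^sub>M theta_space n)"
  unfolding cross_stat_def cond_mean_def by measurable

lemma sqdev_stat_measurable [measurable]:
  "sqdev_stat V Y n A0 \<in> borel_measurable (lborel \<Otimes>\<^sub>M theta_space n)"
  unfolding sqdev_stat_def cond_mean_def by measurable

lemma centre_moment_mu:
  assumes "V > 0" "A0 > 0" "n \<ge> 1" "\<bar>\<sigma>\<bar> = 1"
  shows "(\<integral>\<^sup>+z. ennreal (mu_theta_density V Y n (centre_state Y n A0) z)
            * ennreal (exp (\<sigma> * (sqrt n * (fst z - Ybar Y n)))) \<partial>(lborel \<Otimes>\<^sub>M theta_space n))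
       = ennreal (exp (A0 / 2))"
proof -
  have "(\<integral>\<^sup>+z. ennreal (mu_theta_density V Y n (centre_state Y n A0) z)
            * ennreal (exp (\<sigma> * (sqrt n * (fst z - Ybar Y n)))) \<partial>(lborel \<Otimes>\<^sub>M theta_space n))
      = (\<integral>\<^sup>+\<mu>'. ennreal (normal_density (Ybar Y n) (sqrt (A0 / n)) \<mu>'
            * exp ((\<sigma> * sqrt n) * (\<mu>' - Ybar Y n))) \<partial>lborel)"
    using assms nn_integral_mu_theta_density_fst[where \<mu>=0 and \<theta>="\<lambda>_. Ybar Y n"
        and f="\<lambda>\<mu>'. ennreal (exp (\<sigma> * (sqrt n * (\<mu>' - Ybar Y n))))"]
    by (simp add: thetabar_const ennreal_mult mult.assoc)
  also have "\<dots> = ennreal (exp ((\<sigma> * sqrt n)\<^sup>2 * (sqrt (A0 / n))\<^sup>2 / 2))"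
    using assms by (intro nn_integral_normal_density_exp_linear) simp
  also have "(\<sigma> * sqrt n)\<^sup>2 * (sqrt (A0 / n))\<^sup>2 = A0"
    using assms by (simp add: power_mult_distrib abs_square_eq_1)
  finally show ?thesis .
qed

lemma cond_sd_sq_le: "V > 0 \<Longrightarrow> A > 0 \<Longrightarrow> (cond_sd V A)\<^sup>2 \<le> V"
  by (simp add: cond_sd_sq pos_divide_le_eq mult.commute)

lemma cond_moment_cross:
  assumes "V > 0" "A0 > 0" "n \<ge> 1" "\<bar>\<sigma>\<bar> = 1" "Delta Y n \<le> real n * M"
    and "real n * (\<mu>' - Ybar Y n)\<^sup>2 \<le> K\<^sup>2"
  shows "(\<integral>\<^sup>+\<theta>. ennreal (\<Prod>i<n. normal_density (cond_mean V Y n A0 i \<mu>') (cond_sd V A0) (\<theta> i))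
            * ennreal (exp (\<sigma> * cross_stat V Y n A0 (\<mu>', \<theta>) / sqrt n)) \<partial>theta_space n)
         \<le> ennreal (exp (V * (M + K\<^sup>2) / 2))"
proof -
  let ?m = "\<lambda>i. cond_mean V Y n A0 i \<mu>'" and ?s = "cond_sd V A0"
  let ?c = "\<lambda>i. \<sigma> * (Y n i - \<mu>') / sqrt n"
  have s: "?s > 0" "?s\<^sup>2 \<le> V" using assms by (simp_all add: cond_sd_pos cond_sd_sq_le)
  have "\<sigma>\<^sup>2 = 1" using assms(4) by (metis power2_abs power_one)
  then have "(\<Sum>i<n. (?c i)\<^sup>2) = (\<Sum>i<n. (Y n i - \<mu>')\<^sup>2) / n"
    using assms(3) by (simp add: power_mult_distrib power_divide sum_divide_distrib)
  also have "\<dots> \<le> M + K\<^sup>2"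
    using sum_sq_dev_le[OF assms(3,5,6)] assms(3) by (simp add: divide_le_eq mult.commute)
  finally have "?s\<^sup>2 * (\<Sum>i<n. (?c i)\<^sup>2) \<le> V * (M + K\<^sup>2)"
    using mult_mono[OF s(2)] assms(1) by (simp add: sum_nonneg)
  have "(\<integral>\<^sup>+\<theta>. ennreal (\<Prod>i<n. normal_density (?m i) ?s (\<theta> i))
            * ennreal (exp (\<sigma> * cross_stat V Y n A0 (\<mu>', \<theta>) / sqrt n)) \<partial>theta_space n)
      = (\<integral>\<^sup>+\<theta>. ennreal ((\<Prod>i<n. normal_density (?m i) ?s (\<theta> i)) * exp (\<Sum>i<n. ?c i * (\<theta> i - ?m i)))
            \<partial>theta_space n)"
    unfolding cross_stat_def
    by (intro nn_integral_cong) (simp add: ennreal_mult prod_nonneg sum_distrib_left sum_divide_distrib mult_ac)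
  also have "\<dots> = ennreal (exp (?s\<^sup>2 * (\<Sum>i<n. (?c i)\<^sup>2) / 2))"
    by (rule nn_integral_prod_normal_density_exp_linear[OF s(1)])
  also have "\<dots> \<le> ennreal (exp (V * (M + K\<^sup>2) / 2))"
    using \<open>?s\<^sup>2 * (\<Sum>i<n. (?c i)\<^sup>2) \<le> V * (M + K\<^sup>2)\<close> by (intro ennreal_leI) simp
  finally show ?thesis .
qed

lemma centre_moment_cross:
  assumes "V > 0" "A0 > 0" "n \<ge> 1" "\<bar>\<sigma>\<bar> = 1" "Delta Y n \<le> real n * M"
  shows "(\<integral>\<^sup>+z. ennreal (mu_theta_density V Y n (centre_state Y n A0) z)
            * ennreal (exp (\<sigma> * (if real n * (fst z - Ybar Y n)\<^sup>2 \<le> K\<^sup>2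
                                  then cross_stat V Y n A0 z / sqrt n else 0)))
            \<partial>(lborel \<Otimes>\<^sub>M theta_space n))
       \<le> ennreal (exp (V * (M + K\<^sup>2) / 2))"
proof (rule nn_integral_mu_theta_density_le)
  fix \<mu>'
  have "0 \<le> Delta Y n"
    unfolding Delta_def by (simp add: sum_nonneg)
  with assms(3,5) have "0 \<le> M"
    using mult_pos_neg[of "real n" M] by fastforce
  then show "(\<integral>\<^sup>+\<theta>. ennreal (\<Prod>i<n. normal_density (cond_mean V Y n A0 i \<mu>') (cond_sd V A0) (\<theta> i))
          * ennreal (exp (\<sigma> * (if real n * (fst (\<mu>', \<theta>) - Ybar Y n)\<^sup>2 \<le> K\<^sup>2
                                 then cross_stat V Y n A0 (\<mu>', \<theta>) / sqrt n else 0))) \<partial>theta_space n)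
        \<le> ennreal (exp (V * (M + K\<^sup>2) / 2))"
    using assms cond_moment_cross[OF assms, of \<mu>' K]
    by (cases "real n * (\<mu>' - Ybar Y n)\<^sup>2 \<le> K\<^sup>2") (simp_all add: nn_integral_prod_normal_density cond_sd_pos)
qed (use assms in auto)

lemma centre_moment_sqdev:
  assumes "V > 0" "A0 > 0" "n \<ge> 1" "\<bar>\<sigma>\<bar> = 1"
  shows "(\<integral>\<^sup>+z. ennreal (mu_theta_density V Y n (centre_state Y n A0) z)
            * ennreal (exp (\<sigma> * (sqdev_stat V Y n A0 z / (4 * V * sqrt n))))
            \<partial>(lborel \<Otimes>\<^sub>M theta_space n))
       \<le> ennreal (exp (1 / 4))"
proof (rule nn_integral_mu_theta_density_le)
  fix \<mu>'
  let ?m = "\<lambda>i. cond_mean V Y n A0 i \<mu>'" and ?s = "cond_sd V A0"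
  define c where "c = \<sigma> / (4 * V * sqrt n)"
  define x where "x = 2 * c * ?s\<^sup>2"
  have s: "?s > 0" "?s\<^sup>2 \<le> V" using assms by (simp_all add: cond_sd_pos cond_sd_sq_le)
  have \<sigma>: "\<sigma>\<^sup>2 = 1" using assms(4) by (metis power2_abs power_one)
  have "x\<^sup>2 = (?s\<^sup>2)\<^sup>2 / (4 * V\<^sup>2 * n)"
    using assms(1,3) \<sigma> by (simp add: x_def c_def power_mult_distrib power_divide field_simps)
  also have "\<dots> \<le> V\<^sup>2 / (4 * V\<^sup>2 * n)"
    using s assms(3) by (intro divide_right_mono power_mono) auto
  finally have x2: "real n * x\<^sup>2 \<le> 1 / 4"
    using assms(1,3) by (simp add: field_simps)
  then have x: "\<bar>x\<bar> \<le> 1 / 2"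
    using assms(3) mult_right_mono[of 1 "real n" "x\<^sup>2"]
    by (simp add: abs_le_square_iff[of x "1/2", simplified] power_divide)
  have "(\<integral>\<^sup>+\<theta>'. ennreal (\<Prod>i<n. normal_density (?m i) ?s (\<theta>' i))
          * ennreal (exp (\<sigma> * (sqdev_stat V Y n A0 (\<mu>', \<theta>') / (4 * V * sqrt n)))) \<partial>theta_space n)
      = (\<integral>\<^sup>+\<theta>. ennreal ((\<Prod>i<n. normal_density (?m i) ?s (\<theta> i))
          * exp (c * (\<Sum>i<n. (\<theta> i - ?m i)\<^sup>2 - ?s\<^sup>2))) \<partial>theta_space n)"
    by (intro nn_integral_cong) (simp add: sqdev_stat_def c_def ennreal_mult prod_nonneg)
  also have "\<dots> = ennreal ((exp (- (x / 2)) / sqrt (1 - x)) ^ n)"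
    using x s unfolding x_def by (subst nn_integral_prod_normal_density_exp_square) (simp_all add: mult_ac)
  also have "\<dots> \<le> ennreal (exp (x\<^sup>2) ^ n)"
    using x by (intro ennreal_leI power_mono exp_div_sqrt_one_minus_le) (auto simp: abs_le_iff)
  also have "\<dots> \<le> ennreal (exp (1 / 4))"
    using x2 by (intro ennreal_leI) (simp add: exp_of_nat_mult[symmetric])
  finally show "(\<integral>\<^sup>+\<theta>'. ennreal (\<Prod>i<n. normal_density (?m i) ?s (\<theta>' i))
          * ennreal (exp (\<sigma> * (sqdev_stat V Y n A0 (\<mu>', \<theta>') / (4 * V * sqrt n)))) \<partial>theta_space n)
      \<le> ennreal (exp (1 / 4))" .
qed (use assms in auto)

definition good_set ::
    "real \<Rightarrow> (nat \<Rightarrow> nat \<Rightarrow> real) \<Rightarrow> nat \<Rightarrow> real \<Rightarrow> real \<Rightarrow> real \<Rightarrow> real \<Rightarrow> (real \<times> (nat \<Rightarrow> real)) set"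
  where
  "good_set V Y n A0 K1 K2 K3 = {z. real n * (fst z - Ybar Y n)\<^sup>2 \<le> K1\<^sup>2
     \<and> (cross_stat V Y n A0 z)\<^sup>2 \<le> K2\<^sup>2 * real n \<and> (sqdev_stat V Y n A0 z)\<^sup>2 \<le> K3\<^sup>2 * real n}"

text \<open>The radii are chosen so that each Chernoff tail bound below is at most \<open>1/6\<close>.\<close>

definition mu_radius :: "real \<Rightarrow> real" where
  "mu_radius M = ln 12 + M / 2"

definition cross_radius :: "real \<Rightarrow> real \<Rightarrow> real" where
  "cross_radius V M = ln 12 + V * (M + (mu_radius M)\<^sup>2) / 2"

definition sqdev_radius :: "real \<Rightarrow> real" where
  "sqdev_radius V = 4 * V * (ln 12 + 1 / 4)"

lemma chernoff_sixth:
  fixes X Y :: real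
  assumes "X \<le> Y"
  shows "2 * exp (- (ln 12 + Y)) * exp X \<le> 1 / 6"
proof -
  have "exp (- (ln 12 + Y)) * exp X = exp (X - Y) * exp (- ln 12)"
    by (simp flip: exp_add)
  also have "\<dots> \<le> exp (- ln 12)"
    using assms by simp
  finally show ?thesis
    by (simp add: exp_minus)
qed

lemma good_set_pred [measurable]:
  "Measurable.pred (lborel \<Otimes>\<^sub>M theta_space n) (\<lambda>z. z \<in> good_set V Y n A0 K1 K2 K3)"
  unfolding good_set_def by measurable

lemma centre_tail_mu:
  assumes "V > 0" "A0 > 0" "A0 \<le> M" "n \<ge> 1"
  shows "(\<integral>\<^sup>+z. ennreal (mu_theta_density V Y n (centre_state Y n A0) z)
            * indicator {z. mu_radius M < \<bar>sqrt n * (fst z - Ybar Y n)\<bar>} z \<partial>(lborel \<Otimes>\<^sub>M theta_space n))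
         \<le> ennreal (1 / 6)"
proof -
  have "(\<integral>\<^sup>+z. ennreal (mu_theta_density V Y n (centre_state Y n A0) z)
            * indicator {z. mu_radius M < \<bar>sqrt n * (fst z - Ybar Y n)\<bar>} z \<partial>(lborel \<Otimes>\<^sub>M theta_space n))
      \<le> ennreal (2 * exp (- mu_radius M) * exp (A0 / 2))"
    using assms centre_moment_mu
    by (intro nn_integral_abs_tail_le) (simp_all add: mu_theta_density_nonneg mu_radius_def)
  also have "\<dots> \<le> ennreal (1 / 6)"
    unfolding mu_radius_def using assms(3) by (intro ennreal_leI chernoff_sixth) simp
  finally show ?thesis .
qed

lemma centre_tail_cross:
  assumes "V > 0" "A0 > 0" "A0 \<le> M" "n \<ge> 1" "Delta Y n \<le> real n * M"
  shows "(\<integral>\<^sup>+z. ennreal (mu_theta_density V Y n (centre_state Y n A0) z)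
            * indicator {z. cross_radius V M < \<bar>if real n * (fst z - Ybar Y n)\<^sup>2 \<le> (mu_radius M)\<^sup>2
                                              then cross_stat V Y n A0 z / sqrt n else 0\<bar>} z
            \<partial>(lborel \<Otimes>\<^sub>M theta_space n))
         \<le> ennreal (1 / 6)"
proof -
  have "(\<integral>\<^sup>+z. ennreal (mu_theta_density V Y n (centre_state Y n A0) z)
            * indicator {z. cross_radius V M < \<bar>if real n * (fst z - Ybar Y n)\<^sup>2 \<le> (mu_radius M)\<^sup>2
                                              then cross_stat V Y n A0 z / sqrt n else 0\<bar>} z
            \<partial>(lborel \<Otimes>\<^sub>M theta_space n))
      \<le> ennreal (2 * exp (- cross_radius V M) * exp (V * (M + (mu_radius M)\<^sup>2) / 2))"
    using assms centre_moment_cross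
    by (intro nn_integral_abs_tail_le) (simp_all add: mu_theta_density_nonneg cross_radius_def)
  also have "\<dots> \<le> ennreal (1 / 6)"
    unfolding cross_radius_def by (intro ennreal_leI chernoff_sixth) simp
  finally show ?thesis .
qed

lemma centre_tail_sqdev:
  assumes "V > 0" "A0 > 0" "n \<ge> 1"
  shows "(\<integral>\<^sup>+z. ennreal (mu_theta_density V Y n (centre_state Y n A0) z)
            * indicator {z. ln 12 + 1 / 4 < \<bar>sqdev_stat V Y n A0 z / (4 * V * sqrt n)\<bar>} z
            \<partial>(lborel \<Otimes>\<^sub>M theta_space n))
         \<le> ennreal (1 / 6)"
proof -
  have "(\<integral>\<^sup>+z. ennreal (mu_theta_density V Y n (centre_state Y n A0) z)
            * indicator {z. ln 12 + 1 / 4 < \<bar>sqdev_stat V Y n A0 z / (4 * V * sqrt n)\<bar>} z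
            \<partial>(lborel \<Otimes>\<^sub>M theta_space n))
      \<le> ennreal (2 * exp (- (ln 12 + 1 / 4)) * exp (1 / 4))"
    using assms centre_moment_sqdev
    by (intro nn_integral_abs_tail_le) (simp_all add: mu_theta_density_nonneg)
  also have "\<dots> \<le> ennreal (1 / 6)"
    by (intro ennreal_leI chernoff_sixth) simp
  finally show ?thesis .
qed

lemma not_good_set_imp_tail:
  assumes "V > 0" "n \<ge> 1" "0 \<le> K1" "0 \<le> K2" "0 \<le> k3"
    and "z \<notin> good_set V Y n A0 K1 K2 (4 * V * k3)"
  shows "K1 < \<bar>sqrt n * (fst z - Ybar Y n)\<bar>
    \<or> K2 < \<bar>if real n * (fst z - Ybar Y n)\<^sup>2 \<le> K1\<^sup>2 then cross_stat V Y n A0 z / sqrt n else 0\<bar>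
    \<or> k3 < \<bar>sqdev_stat V Y n A0 z / (4 * V * sqrt n)\<bar>"
proof -
  have n: "real n > 0" using assms(2) by simp
  have lt_abs: "K < \<bar>t\<bar>" if "K\<^sup>2 < t\<^sup>2" "0 \<le> K" for K t :: real
    using that abs_le_square_iff[of t K] by auto
  show ?thesis
  proof (cases "real n * (fst z - Ybar Y n)\<^sup>2 \<le> K1\<^sup>2")
    case True
    have "(cross_stat V Y n A0 z)\<^sup>2 \<le> K2\<^sup>2 * real n \<longleftrightarrow> (cross_stat V Y n A0 z / sqrt n)\<^sup>2 \<le> K2\<^sup>2"
      using n by (simp add: power_divide divide_le_eq)
    moreover have "(sqdev_stat V Y n A0 z)\<^sup>2 \<le> (4 * V * k3)\<^sup>2 * real n
        \<longleftrightarrow> (sqdev_stat V Y n A0 z / (4 * V * sqrt n))\<^sup>2 \<le> k3\<^sup>2"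
      using n assms(1) by (simp add: power_divide power_mult_distrib divide_le_eq mult_ac)
    ultimately have "\<not> (cross_stat V Y n A0 z / sqrt n)\<^sup>2 \<le> K2\<^sup>2
        \<or> \<not> (sqdev_stat V Y n A0 z / (4 * V * sqrt n))\<^sup>2 \<le> k3\<^sup>2"
      using True assms(6) by (auto simp: good_set_def)
    then have "K2 < \<bar>cross_stat V Y n A0 z / sqrt n\<bar> \<or> k3 < \<bar>sqdev_stat V Y n A0 z / (4 * V * sqrt n)\<bar>"
      using lt_abs assms(4,5) by (meson not_le)
    then show ?thesis
      using True by simp
  next
    case False
    then show ?thesis
      using assms(3) lt_abs by (simp add: power_mult_distrib)
  qed
qed

lemma centre_good_set_mass:
  assumes "V > 0" "A0 > 0" "A0 \<le> M" "n \<ge> 1" "Delta Y n \<le> real n * M"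
  shows "ennreal (1 / 2) \<le> (\<integral>\<^sup>+z. ennreal (mu_theta_density V Y n (centre_state Y n A0) z)
            * indicator (good_set V Y n A0 (mu_radius M) (cross_radius V M) (sqdev_radius V)) z
            \<partial>(lborel \<Otimes>\<^sub>M theta_space n))" (is "_ \<le> ?good")
proof -
  let ?P = "lborel \<Otimes>\<^sub>M theta_space n" and ?p = "\<lambda>z. ennreal (mu_theta_density V Y n (centre_state Y n A0) z)"
  define G where "G = good_set V Y n A0 (mu_radius M) (cross_radius V M) (sqdev_radius V)"
  define T1 where "T1 = {z :: real \<times> (nat \<Rightarrow> real). mu_radius M < \<bar>sqrt n * (fst z - Ybar Y n)\<bar>}"
  define T2 where "T2 = {z. cross_radius V M < \<bar>if real n * (fst z - Ybar Y n)\<^sup>2 \<le> (mu_radius M)\<^sup>2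
                                    then cross_stat V Y n A0 z / sqrt n else 0\<bar>}"
  define T3 where "T3 = {z. ln 12 + 1 / 4 < \<bar>sqdev_stat V Y n A0 z / (4 * V * sqrt n)\<bar>}"
  have [measurable]: "Measurable.pred ?P (\<lambda>z. z \<in> G)" "Measurable.pred ?P (\<lambda>z. z \<in> T1)"
    "Measurable.pred ?P (\<lambda>z. z \<in> T2)" "Measurable.pred ?P (\<lambda>z. z \<in> T3)"
    unfolding G_def T1_def T2_def T3_def by measurable
  have mem: "z \<in> G \<or> z \<in> T1 \<or> z \<in> T2 \<or> z \<in> T3" for z
  proof -
    have K: "0 \<le> mu_radius M" "0 \<le> cross_radius V M" "(0::real) \<le> ln 12 + 1 / 4"
      using assms(1-3) by (simp_all add: mu_radius_def cross_radius_def)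
    have "G = good_set V Y n A0 (mu_radius M) (cross_radius V M) (4 * V * (ln 12 + 1 / 4))"
      by (simp add: G_def sqdev_radius_def)
    then show ?thesis
      using not_good_set_imp_tail[OF assms(1,4) K, of z Y A0]
      unfolding T1_def T2_def T3_def mem_Collect_eq by blast
  qed
  have cover: "(1::ennreal) \<le> indicator G z + indicator T1 z + indicator T2 z + indicator T3 z" for z
    using mem[of z] by (auto simp: indicator_def)
  have "1 = (\<integral>\<^sup>+z. ?p z \<partial>?P)"
    using assms nn_integral_mu_theta_density_fst[where f="\<lambda>_. 1" and \<theta>="\<lambda>_. Ybar Y n"]
    by (simp add: nn_integral_normal_density)
  also have "\<dots> \<le> (\<integral>\<^sup>+z. ?p z * (indicator G z + indicator T1 z + indicator T2 z + indicator T3 z) \<partial>?P)"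
  proof (intro nn_integral_mono)
    show "?p z \<le> ?p z * (indicator G z + indicator T1 z + indicator T2 z + indicator T3 z)" for z
      using mult_left_mono[OF cover[of z], of "?p z"] by simp
  qed
  also have "\<dots> = ?good + (\<integral>\<^sup>+z. ?p z * indicator T1 z \<partial>?P) + (\<integral>\<^sup>+z. ?p z * indicator T2 z \<partial>?P)
      + (\<integral>\<^sup>+z. ?p z * indicator T3 z \<partial>?P)"
    unfolding distrib_left G_def[symmetric]
    apply (subst nn_integral_add, measurable, measurable)
    apply (subst nn_integral_add, measurable, measurable)
    by (subst nn_integral_add, measurable, measurable)
  also have "\<dots> \<le> ?good + ennreal (1 / 6) + ennreal (1 / 6) + ennreal (1 / 6)"
    using centre_tail_mu[OF assms(1-4)] centre_tail_cross[OF assms] centre_tail_sqdev[OF assms(1,2,4)]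
    unfolding T1_def T2_def T3_def by (intro add_mono) auto
  also have "\<dots> = ennreal (1 / 2) + ?good"
    by (simp add: ac_simps ennreal_plus[symmetric] del: ennreal_plus)
  finally have le: "1 \<le> ennreal (1 / 2) + ?good" .
  have "1 = ennreal (1 / 2) + ennreal (1 / 2)"
    using ennreal_plus[of "1 / 2" "1 / 2"] by simp
  with le have "ennreal (1 / 2) + ennreal (1 / 2) \<le> ennreal (1 / 2) + ?good"
    by (simp only:)
  then show ?thesis
    unfolding ennreal_add_left_cancel_le by simp
qed

lemma abs_mult_le_sqrt:
  fixes x y K d :: real
  assumes "x\<^sup>2 * y\<^sup>2 \<le> K\<^sup>2 * d" "K \<ge> 0" "d \<ge> 0"
  shows "\<bar>x\<bar> * \<bar>y\<bar> \<le> K * sqrt d"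
proof (rule power2_le_imp_le)
  show "(\<bar>x\<bar> * \<bar>y\<bar>)\<^sup>2 \<le> (K * sqrt d)\<^sup>2"
    using assms by (simp add: power_mult_distrib)
qed (use assms in simp)

lemma ln_ratio_variance_ge:
  fixes s s0 :: real
  assumes "s > 0" "s0 > 0"
  shows "ln (s0 / s) + (1 / (2 * s0\<^sup>2) - 1 / (2 * s\<^sup>2)) * s0\<^sup>2 \<ge> - ((s0\<^sup>2 - s\<^sup>2)\<^sup>2 / (2 * s\<^sup>2 * s0\<^sup>2))"
proof -
  define r where "r = s0\<^sup>2 / s\<^sup>2"
  have r: "r > 0" using assms by (simp add: r_def)
  have "ln r = 2 * ln (s0 / s)"
    using assms by (simp add: r_def power_divide[symmetric] ln_realpow)
  moreover have "ln (1 / r) \<le> 1 / r - 1"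
    using r by (intro ln_le_minus_one) simp
  moreover have "(1 / (2 * s0\<^sup>2) - 1 / (2 * s\<^sup>2)) * s0\<^sup>2 = 1 / 2 - r / 2"
    using assms by (simp add: r_def field_simps)
  moreover have "(s0\<^sup>2 - s\<^sup>2)\<^sup>2 / (2 * s\<^sup>2 * s0\<^sup>2) = (r - 1)\<^sup>2 / (2 * r)"
    using assms by (simp add: r_def field_simps power2_eq_square)
  moreover have "- ((r - 1)\<^sup>2 / (2 * r)) = 1 - 1 / (2 * r) - r / 2"
    using r by (simp add: field_simps power2_eq_square)
  ultimately show ?thesis
    using r by (simp add: ln_div)
qed

lemma sum_log_normal_ratio_eq:
  fixes t m m0 c :: "nat \<Rightarrow> real" and \<kappa> s s0 :: real
  assumes "s > 0" "s0 > 0" and "\<And>i. m i - m0 i = \<kappa> * c i"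
  shows "(\<Sum>i<n. ln (s0 / s) - (t i - m i)\<^sup>2 / (2 * s\<^sup>2) + (t i - m0 i)\<^sup>2 / (2 * s0\<^sup>2))
    = real n * (ln (s0 / s) + (1 / (2 * s0\<^sup>2) - 1 / (2 * s\<^sup>2)) * s0\<^sup>2)
      + (1 / (2 * s0\<^sup>2) - 1 / (2 * s\<^sup>2)) * (\<Sum>i<n. (t i - m0 i)\<^sup>2 - s0\<^sup>2)
      + \<kappa> / s\<^sup>2 * (\<Sum>i<n. (t i - m0 i) * c i) - \<kappa>\<^sup>2 / (2 * s\<^sup>2) * (\<Sum>i<n. (c i)\<^sup>2)"
proof -
  define \<rho> where "\<rho> = 1 / (2 * s0\<^sup>2) - 1 / (2 * s\<^sup>2)"
  have pt: "ln (s0 / s) - (t i - m i)\<^sup>2 / (2 * s\<^sup>2) + (t i - m0 i)\<^sup>2 / (2 * s0\<^sup>2)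
     = (ln (s0 / s) + \<rho> * s0\<^sup>2) + \<rho> * ((t i - m0 i)\<^sup>2 - s0\<^sup>2) + \<kappa> / s\<^sup>2 * ((t i - m0 i) * c i)
       - \<kappa>\<^sup>2 / (2 * s\<^sup>2) * (c i)\<^sup>2" for i
  proof -
    have "u\<^sup>2 / (2 * s0\<^sup>2) - (u - \<kappa> * v)\<^sup>2 / (2 * s\<^sup>2)
        = \<rho> * s0\<^sup>2 + \<rho> * (u\<^sup>2 - s0\<^sup>2) + \<kappa> / s\<^sup>2 * (u * v) - \<kappa>\<^sup>2 / (2 * s\<^sup>2) * v\<^sup>2" for u v
      using assms(1,2) unfolding \<rho>_def by (simp add: field_simps power2_eq_square)
    moreover have "t i - m i = (t i - m0 i) - \<kappa> * c i"
      using assms(3)[of i] by linarith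
    ultimately have "(t i - m0 i)\<^sup>2 / (2 * s0\<^sup>2) - (t i - m i)\<^sup>2 / (2 * s\<^sup>2)
        = \<rho> * s0\<^sup>2 + \<rho> * ((t i - m0 i)\<^sup>2 - s0\<^sup>2) + \<kappa> / s\<^sup>2 * ((t i - m0 i) * c i)
          - \<kappa>\<^sup>2 / (2 * s\<^sup>2) * (c i)\<^sup>2"
      by (simp only:)
    then show ?thesis
      by linarith
  qed
  show ?thesis
    unfolding pt \<rho>_def[symmetric]
    by (simp add: sum.distrib sum_subtractf sum_distrib_left[symmetric] sum_divide_distrib[symmetric])
qed

lemma variance_terms_ge:
  fixes s s0 sL D W K3 nr d :: real
  assumes "s > 0" "s0 > 0" "0 < sL" "sL \<le> s\<^sup>2" "sL \<le> s0\<^sup>2"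
    and "\<bar>s0\<^sup>2 - s\<^sup>2\<bar> \<le> D" "nr * D\<^sup>2 \<le> d" "W\<^sup>2 \<le> K3\<^sup>2 * nr" "K3 \<ge> 0" "nr > 0"
  shows "nr * (ln (s0 / s) + (1 / (2 * s0\<^sup>2) - 1 / (2 * s\<^sup>2)) * s0\<^sup>2)
           + (1 / (2 * s0\<^sup>2) - 1 / (2 * s\<^sup>2)) * W
         \<ge> - (d / (2 * sL\<^sup>2) + K3 * sqrt d / (2 * sL\<^sup>2))"
proof -
  have D: "0 \<le> D" using assms(6) by linarith
  have d: "0 \<le> d" using assms(7,10) D by (smt (verit) mult_nonneg_nonneg zero_le_power2)
  have ss: "sL\<^sup>2 \<le> s\<^sup>2 * s0\<^sup>2"
    using assms(3-5) mult_mono[of sL "s\<^sup>2" sL "s0\<^sup>2"] by (simp add: power2_eq_square)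
  have "(s0\<^sup>2 - s\<^sup>2)\<^sup>2 \<le> D\<^sup>2"
    using assms(6) by (metis abs_le_square_iff abs_of_nonneg D power2_abs)
  then have "(s0\<^sup>2 - s\<^sup>2)\<^sup>2 / (2 * s\<^sup>2 * s0\<^sup>2) \<le> D\<^sup>2 / (2 * sL\<^sup>2)"
    using ss assms(1-3) by (intro frac_le) auto
  then have "nr * (ln (s0 / s) + (1 / (2 * s0\<^sup>2) - 1 / (2 * s\<^sup>2)) * s0\<^sup>2) \<ge> nr * - (D\<^sup>2 / (2 * sL\<^sup>2))"
    using ln_ratio_variance_ge[OF assms(1,2)] assms(10) by (intro mult_left_mono) auto
  moreover have "nr * (D\<^sup>2 / (2 * sL\<^sup>2)) \<le> d / (2 * sL\<^sup>2)"
    using assms(3,7) by (simp add: divide_right_mono)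
  moreover have "\<bar>(1 / (2 * s0\<^sup>2) - 1 / (2 * s\<^sup>2)) * W\<bar> \<le> K3 * sqrt d / (2 * sL\<^sup>2)"
  proof -
    have "\<bar>1 / (2 * s0\<^sup>2) - 1 / (2 * s\<^sup>2)\<bar> = \<bar>s0\<^sup>2 - s\<^sup>2\<bar> / (2 * s\<^sup>2 * s0\<^sup>2)"
      using assms(1,2) by (simp add: field_simps abs_divide abs_minus_commute)
    also have "\<dots> \<le> D / (2 * sL\<^sup>2)"
      using assms(1-3,6) ss D by (auto intro!: frac_le)
    finally have "\<bar>1 / (2 * s0\<^sup>2) - 1 / (2 * s\<^sup>2)\<bar> * \<bar>W\<bar> \<le> D / (2 * sL\<^sup>2) * \<bar>W\<bar>"
      by (rule mult_right_mono) simp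
    then have "\<bar>(1 / (2 * s0\<^sup>2) - 1 / (2 * s\<^sup>2)) * W\<bar> \<le> \<bar>W\<bar> * \<bar>D\<bar> / (2 * sL\<^sup>2)"
      using D by (simp add: abs_mult mult.commute)
    also have "\<bar>W\<bar> * \<bar>D\<bar> \<le> K3 * sqrt d"
      using mult_right_mono[OF assms(8), of "D\<^sup>2"] mult_left_mono[OF assms(7), of "K3\<^sup>2"] assms(9) d
      by (intro abs_mult_le_sqrt) (simp_all add: mult_ac)
    finally show ?thesis
      using assms(3) by (simp add: divide_right_mono)
  qed
  ultimately show ?thesis
    by (simp add: abs_le_iff)
qed

lemma mean_terms_ge:
  fixes s sL D V \<kappa> S K2 Cs Cn nr d :: real
  assumes "0 < sL" "sL \<le> s\<^sup>2" "V > 0" "0 \<le> D" "\<bar>\<kappa>\<bar> \<le> D / V" "nr * D\<^sup>2 \<le> d"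
    and "S\<^sup>2 \<le> K2\<^sup>2 * nr" "K2 \<ge> 0" "0 \<le> Cs" "Cs \<le> nr * Cn" "nr > 0"
  shows "\<kappa> / s\<^sup>2 * S - \<kappa>\<^sup>2 / (2 * s\<^sup>2) * Cs \<ge> - (K2 * sqrt d / (V * sL) + d * Cn / (2 * V\<^sup>2 * sL))"
proof -
  have d: "0 \<le> d" using assms(6,11) by (smt (verit) mult_nonneg_nonneg zero_le_power2)
  have Cn: "0 \<le> Cn" using assms(9-11) by (smt (verit) mult_pos_neg)
  have "\<bar>\<kappa> / s\<^sup>2 * S\<bar> = \<bar>\<kappa>\<bar> * \<bar>S\<bar> / s\<^sup>2"
    by (simp add: abs_mult abs_divide)
  also have "\<dots> \<le> D / V * \<bar>S\<bar> / sL"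
    using assms(1-5) by (intro frac_le mult_right_mono) auto
  also have "\<dots> = \<bar>S\<bar> * \<bar>D\<bar> / (V * sL)"
    using assms(4) by simp
  also have "\<bar>S\<bar> * \<bar>D\<bar> \<le> K2 * sqrt d"
    using mult_right_mono[OF assms(7), of "D\<^sup>2"] mult_left_mono[OF assms(6), of "K2\<^sup>2"] assms(8) d
    by (intro abs_mult_le_sqrt) (simp_all add: mult_ac)
  finally have cross: "\<bar>\<kappa> / s\<^sup>2 * S\<bar> \<le> K2 * sqrt d / (V * sL)"
    using assms(1,3) by (simp add: divide_right_mono)
  have "\<kappa>\<^sup>2 \<le> (D / V)\<^sup>2"
    using assms(5) by (metis abs_le_square_iff abs_of_nonneg assms(3,4) divide_nonneg_pos power2_abs)
  then have "\<kappa>\<^sup>2 / (2 * s\<^sup>2) * Cs \<le> (D / V)\<^sup>2 / (2 * sL) * (nr * Cn)"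
    using assms(1,2,9,10) by (intro mult_mono frac_le) auto
  also have "\<dots> = (nr * D\<^sup>2) * Cn / (2 * V\<^sup>2 * sL)"
    by (simp add: field_simps power_divide)
  also have "\<dots> \<le> d * Cn / (2 * V\<^sup>2 * sL)"
    using assms(1,3,6) Cn by (intro divide_right_mono mult_right_mono) auto
  finally show ?thesis
    using cross unfolding abs_le_iff by linarith
qed

lemma cond_mean_diff:
  "V + A \<noteq> 0 \<Longrightarrow> V + A0 \<noteq> 0 \<Longrightarrow> cond_mean V Y n A i \<mu>' - cond_mean V Y n A0 i \<mu>'
     = (A / (V + A) - A0 / (V + A0)) * (Y n i - \<mu>')"
  unfolding cond_mean_def by (simp add: field_simps)

lemma shrinkage_diff_le:
  fixes V A A0 :: real
  assumes "V > 0" "A > 0" "A0 > 0"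
  shows "\<bar>A / (V + A) - A0 / (V + A0)\<bar> \<le> \<bar>A - A0\<bar> / V"
proof -
  have "A / (V + A) - A0 / (V + A0) = V / ((V + A) * (V + A0)) * (A - A0)"
    using assms by (simp add: field_simps)
  then have "\<bar>A / (V + A) - A0 / (V + A0)\<bar> = V / ((V + A) * (V + A0)) * \<bar>A - A0\<bar>"
    using assms by (simp add: abs_mult)
  also have "\<dots> \<le> 1 / V * \<bar>A - A0\<bar>"
  proof (rule mult_right_mono)
    have "V * V \<le> (V + A) * (V + A0)"
      using assms by (simp add: algebra_simps)
    then have "V / ((V + A) * (V + A0)) \<le> V / (V * V)"
      using assms by (intro frac_le) auto
    then show "V / ((V + A) * (V + A0)) \<le> 1 / V"
      using assms by simp
  qed simp
  finally show ?thesis by simp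
qed

lemma cond_sd_sq_diff_le:
  fixes V A A0 :: real
  assumes "V > 0" "A > 0" "A0 > 0"
  shows "\<bar>(cond_sd V A0)\<^sup>2 - (cond_sd V A)\<^sup>2\<bar> \<le> \<bar>A - A0\<bar>"
proof -
  have "(cond_sd V A0)\<^sup>2 - (cond_sd V A)\<^sup>2 = V\<^sup>2 / ((V + A) * (V + A0)) * (A0 - A)"
    unfolding cond_sd_sq[OF assms(1,2)] cond_sd_sq[OF assms(1,3)]
    using assms by (simp add: field_simps power2_eq_square)
  then have "\<bar>(cond_sd V A0)\<^sup>2 - (cond_sd V A)\<^sup>2\<bar> = V\<^sup>2 / ((V + A) * (V + A0)) * \<bar>A - A0\<bar>"
    using assms by (simp add: abs_mult abs_minus_commute)
  also have "\<dots> \<le> V\<^sup>2 / V\<^sup>2 * \<bar>A - A0\<bar>"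
    using assms by (intro mult_right_mono frac_le) (simp_all add: algebra_simps power2_eq_square)
  finally show ?thesis
    using assms by simp
qed

lemma cond_sd_sq_ge:
  assumes "V > 0" "0 < a" "a \<le> A" "A \<le> b"
  shows "a * V / (V + b) \<le> (cond_sd V A)\<^sup>2"
proof -
  have "a / (V + b) \<le> A / (V + A)"
    using assms by (intro frac_le) auto
  then show ?thesis
    using assms mult_right_mono[of "a / (V + b)" "A / (V + A)" V] by (simp add: cond_sd_sq)
qed

lemma mu_log_ratio_ge:
  fixes A A0 \<delta> Mx d K1 tb Yb \<mu>' :: real
  assumes "\<delta> > 0" "n \<ge> 1" "\<delta> \<le> A0" "\<delta> / 2 \<le> A" "A \<le> Mx"
    and "real n * (tb - Yb)\<^sup>2 \<le> d" "real n * (\<mu>' - Yb)\<^sup>2 \<le> K1\<^sup>2"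
  shows "ln (sqrt (A0 / n) / sqrt (A / n)) - (\<mu>' - tb)\<^sup>2 / (2 * (sqrt (A / n))\<^sup>2)
           + (\<mu>' - Yb)\<^sup>2 / (2 * (sqrt (A0 / n))\<^sup>2)
         \<ge> - ((Mx / \<delta> - 1) / 2 + (2 * K1\<^sup>2 + 2 * d) / \<delta>)"
proof -
  have n: "real n > 0" and A: "A > 0" "A0 > 0"
    using assms(1-4) by auto
  have ln_eq: "ln (sqrt (A0 / n) / sqrt (A / n)) = - ln (A / A0) / 2"
    using n A by (simp add: real_sqrt_divide[symmetric] ln_sqrt ln_div)
  have ln_le: "ln (A / A0) \<le> Mx / \<delta> - 1"
    using ln_le_minus_one[of "A / A0"] frac_le[of Mx A \<delta> A0] A assms(1,3,5) by simp
  have q: "real n * (\<mu>' - tb)\<^sup>2 \<le> 2 * K1\<^sup>2 + 2 * d"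
  proof -
    have "(\<mu>' - tb)\<^sup>2 \<le> 2 * (\<mu>' - Yb)\<^sup>2 + 2 * (tb - Yb)\<^sup>2"
      using sum_power2_ge_zero[of "\<mu>' + tb - 2 * Yb" 0] by (simp add: power2_eq_square algebra_simps)
    then have "real n * (\<mu>' - tb)\<^sup>2 \<le> 2 * (real n * (\<mu>' - Yb)\<^sup>2) + 2 * (real n * (tb - Yb)\<^sup>2)"
      using mult_left_mono[of "(\<mu>' - tb)\<^sup>2" "2 * (\<mu>' - Yb)\<^sup>2 + 2 * (tb - Yb)\<^sup>2" "real n"]
      by (simp add: algebra_simps)
    then show ?thesis
      using assms(6,7) by linarith
  qed
  have "0 \<le> real n * (\<mu>' - tb)\<^sup>2"
    by simp
  with q have "0 \<le> 2 * K1\<^sup>2 + 2 * d"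
    by linarith
  with q have "real n * (\<mu>' - tb)\<^sup>2 / (2 * A) \<le> (2 * K1\<^sup>2 + 2 * d) / \<delta>"
    using assms(1,4) by (intro frac_le) auto
  moreover have "(\<mu>' - tb)\<^sup>2 / (2 * (sqrt (A / n))\<^sup>2) = real n * (\<mu>' - tb)\<^sup>2 / (2 * A)"
    using n A by simp
  moreover have "0 \<le> (\<mu>' - Yb)\<^sup>2 / (2 * (sqrt (A0 / n))\<^sup>2)"
    by simp
  ultimately show ?thesis
    using ln_eq ln_le by argo
qed

lemma theta_log_ratio_ge:
  fixes t :: "nat \<Rightarrow> real"
  assumes "V > 0" "\<delta> > 0" "\<delta> / 2 \<le> A" "A \<le> Mx" "\<delta> \<le> A0" "A0 \<le> Mx" "n \<ge> 1"
    and "real n * (A - A0)\<^sup>2 \<le> d" "K2 \<ge> 0" "K3 \<ge> 0"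
    and "(cross_stat V Y n A0 (\<mu>', t))\<^sup>2 \<le> K2\<^sup>2 * real n"
    and "(sqdev_stat V Y n A0 (\<mu>', t))\<^sup>2 \<le> K3\<^sup>2 * real n"
    and "(\<Sum>i<n. (Y n i - \<mu>')\<^sup>2) \<le> real n * (M + K1\<^sup>2)"
  defines "sL \<equiv> \<delta> / 2 * V / (V + Mx)"
  shows "(\<Sum>i<n. ln (cond_sd V A0 / cond_sd V A)
            - (t i - cond_mean V Y n A i \<mu>')\<^sup>2 / (2 * (cond_sd V A)\<^sup>2)
            + (t i - cond_mean V Y n A0 i \<mu>')\<^sup>2 / (2 * (cond_sd V A0)\<^sup>2))
         \<ge> - (d / (2 * sL\<^sup>2) + K3 * sqrt d / (2 * sL\<^sup>2) + K2 * sqrt d / (V * sL)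
               + d * (M + K1\<^sup>2) / (2 * V\<^sup>2 * sL))"
proof -
  let ?s = "cond_sd V A" and ?s' = "cond_sd V A0" and ?\<kappa> = "A / (V + A) - A0 / (V + A0)"
  have A: "A > 0" "A0 > 0" using assms(2,3,5) by linarith+
  have s: "?s > 0" "?s' > 0" using assms(1) A by (simp_all add: cond_sd_pos)
  have sL: "0 < sL" "sL \<le> ?s\<^sup>2" "sL \<le> ?s'\<^sup>2"
    using assms(1-6) cond_sd_sq_ge[of V "\<delta> / 2" A Mx] cond_sd_sq_ge[of V "\<delta> / 2" A0 Mx]
    by (simp_all add: sL_def)
  have "cond_mean V Y n A i \<mu>' - cond_mean V Y n A0 i \<mu>' = ?\<kappa> * (Y n i - \<mu>')" for i
    using assms(1) A by (intro cond_mean_diff) auto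
  then have "(\<Sum>i<n. ln (?s' / ?s) - (t i - cond_mean V Y n A i \<mu>')\<^sup>2 / (2 * ?s\<^sup>2)
            + (t i - cond_mean V Y n A0 i \<mu>')\<^sup>2 / (2 * ?s'\<^sup>2))
      = real n * (ln (?s' / ?s) + (1 / (2 * ?s'\<^sup>2) - 1 / (2 * ?s\<^sup>2)) * ?s'\<^sup>2)
        + (1 / (2 * ?s'\<^sup>2) - 1 / (2 * ?s\<^sup>2)) * sqdev_stat V Y n A0 (\<mu>', t)
        + ?\<kappa> / ?s\<^sup>2 * cross_stat V Y n A0 (\<mu>', t) - ?\<kappa>\<^sup>2 / (2 * ?s\<^sup>2) * (\<Sum>i<n. (Y n i - \<mu>')\<^sup>2)"
    unfolding sqdev_stat_def cross_stat_def using s by (subst sum_log_normal_ratio_eq) simp_all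
  moreover have "real n * (ln (?s' / ?s) + (1 / (2 * ?s'\<^sup>2) - 1 / (2 * ?s\<^sup>2)) * ?s'\<^sup>2)
        + (1 / (2 * ?s'\<^sup>2) - 1 / (2 * ?s\<^sup>2)) * sqdev_stat V Y n A0 (\<mu>', t)
      \<ge> - (d / (2 * sL\<^sup>2) + K3 * sqrt d / (2 * sL\<^sup>2))"
    using assms(7,8,10,12) cond_sd_sq_diff_le[OF assms(1) A] s sL
    by (intro variance_terms_ge[where D = "\<bar>A - A0\<bar>"]) simp_all
  moreover have "?\<kappa> / ?s\<^sup>2 * cross_stat V Y n A0 (\<mu>', t) - ?\<kappa>\<^sup>2 / (2 * ?s\<^sup>2) * (\<Sum>i<n. (Y n i - \<mu>')\<^sup>2)
      \<ge> - (K2 * sqrt d / (V * sL) + d * (M + K1\<^sup>2) / (2 * V\<^sup>2 * sL))"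
    using assms(1,7,8,9,11,13) shrinkage_diff_le[OF assms(1) A] sL
    by (intro mean_terms_ge[where D = "\<bar>A - A0\<bar>" and nr = "real n"]) (simp_all add: sum_nonneg)
  ultimately show ?thesis
    by linarith
qed

definition ratio_bound :: "real \<Rightarrow> real \<Rightarrow> real \<Rightarrow> real \<Rightarrow> real \<Rightarrow> real \<Rightarrow> real \<Rightarrow> real \<Rightarrow> real" where
  "ratio_bound V \<delta> Mx M d K1 K2 K3 = (let sL = \<delta> / 2 * V / (V + Mx) in
     (Mx / \<delta> - 1) / 2 + (2 * K1\<^sup>2 + 2 * d) / \<delta>
     + (d / (2 * sL\<^sup>2) + K3 * sqrt d / (2 * sL\<^sup>2) + K2 * sqrt d / (V * sL)
        + d * (M + K1\<^sup>2) / (2 * V\<^sup>2 * sL)))"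

lemma mu_theta_density_ratio_eq:
  assumes "V > 0" "A > 0" "A0 > 0" "n \<ge> 1"
  shows "mu_theta_density V Y n (A, \<mu>, \<theta>) (\<mu>', t)
       = mu_theta_density V Y n (centre_state Y n A0) (\<mu>', t)
         * exp ((ln (sqrt (A0 / n) / sqrt (A / n)) - (\<mu>' - thetabar n \<theta>)\<^sup>2 / (2 * (sqrt (A / n))\<^sup>2)
                  + (\<mu>' - Ybar Y n)\<^sup>2 / (2 * (sqrt (A0 / n))\<^sup>2))
              + (\<Sum>i<n. ln (cond_sd V A0 / cond_sd V A)
                  - (t i - cond_mean V Y n A i \<mu>')\<^sup>2 / (2 * (cond_sd V A)\<^sup>2)
                  + (t i - cond_mean V Y n A0 i \<mu>')\<^sup>2 / (2 * (cond_sd V A0)\<^sup>2)))"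
    (is "_ = _ * exp (?l\<mu> + ?l\<theta>)")
proof -
  have "(\<Prod>i<n. normal_density (cond_mean V Y n A i \<mu>') (cond_sd V A) (t i))
      = (\<Prod>i<n. normal_density (cond_mean V Y n A0 i \<mu>') (cond_sd V A0) (t i)
          * exp (ln (cond_sd V A0 / cond_sd V A) - (t i - cond_mean V Y n A i \<mu>')\<^sup>2 / (2 * (cond_sd V A)\<^sup>2)
                 + (t i - cond_mean V Y n A0 i \<mu>')\<^sup>2 / (2 * (cond_sd V A0)\<^sup>2)))"
    using assms by (intro prod.cong refl normal_density_ratio cond_sd_pos)
  also have "\<dots> = (\<Prod>i<n. normal_density (cond_mean V Y n A0 i \<mu>') (cond_sd V A0) (t i)) * exp ?l\<theta>"
    by (simp add: exp_sum prod.distrib)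
  finally have "(\<Prod>i<n. normal_density (cond_mean V Y n A i \<mu>') (cond_sd V A) (t i))
      = (\<Prod>i<n. normal_density (cond_mean V Y n A0 i \<mu>') (cond_sd V A0) (t i)) * exp ?l\<theta>" .
  moreover have "normal_density (thetabar n \<theta>) (sqrt (A / n)) \<mu>'
      = normal_density (Ybar Y n) (sqrt (A0 / n)) \<mu>' * exp ?l\<mu>"
    using assms by (intro normal_density_ratio) auto
  ultimately show ?thesis
    using assms(4) unfolding mu_theta_density_def by (simp add: thetabar_const exp_add mult_ac)
qed

lemma mu_theta_density_ratio_ge:
  assumes "V > 0" "\<delta> > 0" "n \<ge> 1" "\<delta> \<le> A0" "A0 \<le> Mx" "\<delta> / 2 \<le> A" "A \<le> Mx"
    and "real n * (A - A0)\<^sup>2 \<le> d" "real n * (thetabar n \<theta> - Ybar Y n)\<^sup>2 \<le> d"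
    and "Delta Y n \<le> real n * M" "K2 \<ge> 0" "K3 \<ge> 0" "z \<in> good_set V Y n A0 K1 K2 K3"
  shows "exp (- ratio_bound V \<delta> Mx M d K1 K2 K3) * mu_theta_density V Y n (centre_state Y n A0) z
       \<le> mu_theta_density V Y n (A, \<mu>, \<theta>) z"
proof -
  obtain \<mu>' t where z: "z = (\<mu>', t)" by fastforce
  have A: "A > 0" "A0 > 0" using assms(2,4,6) by linarith+
  have good: "real n * (\<mu>' - Ybar Y n)\<^sup>2 \<le> K1\<^sup>2" "(cross_stat V Y n A0 (\<mu>', t))\<^sup>2 \<le> K2\<^sup>2 * real n"
    "(sqdev_stat V Y n A0 (\<mu>', t))\<^sup>2 \<le> K3\<^sup>2 * real n"
    using assms(13) by (simp_all add: good_set_def z)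
  have "- ((Mx / \<delta> - 1) / 2 + (2 * K1\<^sup>2 + 2 * d) / \<delta>)
      \<le> ln (sqrt (A0 / n) / sqrt (A / n)) - (\<mu>' - thetabar n \<theta>)\<^sup>2 / (2 * (sqrt (A / n))\<^sup>2)
         + (\<mu>' - Ybar Y n)\<^sup>2 / (2 * (sqrt (A0 / n))\<^sup>2)"
    using assms(2-4,6,7,9) good(1) by (rule mu_log_ratio_ge)
  moreover have "- (d / (2 * (\<delta> / 2 * V / (V + Mx))\<^sup>2) + K3 * sqrt d / (2 * (\<delta> / 2 * V / (V + Mx))\<^sup>2)
        + K2 * sqrt d / (V * (\<delta> / 2 * V / (V + Mx))) + d * (M + K1\<^sup>2) / (2 * V\<^sup>2 * (\<delta> / 2 * V / (V + Mx))))
      \<le> (\<Sum>i<n. ln (cond_sd V A0 / cond_sd V A) - (t i - cond_mean V Y n A i \<mu>')\<^sup>2 / (2 * (cond_sd V A)\<^sup>2)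
           + (t i - cond_mean V Y n A0 i \<mu>')\<^sup>2 / (2 * (cond_sd V A0)\<^sup>2))"
    using assms(1-8,11,12) good(2,3) sum_sq_dev_le[OF assms(3,10) good(1)]
    by (intro theta_log_ratio_ge) simp_all
  ultimately have "exp (- ratio_bound V \<delta> Mx M d K1 K2 K3)
      \<le> exp ((ln (sqrt (A0 / n) / sqrt (A / n)) - (\<mu>' - thetabar n \<theta>)\<^sup>2 / (2 * (sqrt (A / n))\<^sup>2)
                  + (\<mu>' - Ybar Y n)\<^sup>2 / (2 * (sqrt (A0 / n))\<^sup>2))
              + (\<Sum>i<n. ln (cond_sd V A0 / cond_sd V A)
                  - (t i - cond_mean V Y n A i \<mu>')\<^sup>2 / (2 * (cond_sd V A)\<^sup>2)
                  + (t i - cond_mean V Y n A0 i \<mu>')\<^sup>2 / (2 * (cond_sd V A0)\<^sup>2)))"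
    unfolding exp_le_cancel_iff ratio_bound_def Let_def by linarith
  from mult_right_mono[OF this mu_theta_density_nonneg[of V Y n "centre_state Y n A0" z]] show ?thesis
    unfolding z mu_theta_density_ratio_eq[OF assms(1) A assms(3)] by (simp only: ac_simps)
qed

definition good_states ::
    "real \<Rightarrow> (nat \<Rightarrow> nat \<Rightarrow> real) \<Rightarrow> nat \<Rightarrow> real \<Rightarrow> real \<Rightarrow> real \<Rightarrow> real \<Rightarrow> state set"
  where
  "good_states V Y n A0 K1 K2 K3 = {y \<in> Xset n. snd y \<in> good_set V Y n A0 K1 K2 K3}"

lemma Xset_sets [measurable]: "Xset n \<in> sets (state_space n)"
  unfolding Xset_def state_space_def by measurable

lemma good_states_sets [measurable]: "good_states V Y n A0 K1 K2 K3 \<in> sets (state_space n)"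
  unfolding good_states_def Xset_def state_space_def by measurable

lemma centre_kernel_good_mass:
  assumes "V > 0" "a > 0" "b0 > 0" "A0 > 0" "A0 \<le> M" "n \<ge> 1" "Delta Y n \<le> real n * M"
  shows "ennreal (1 / 2) \<le> emeasure (gibbs_kernel V a b0 Y n (centre_state Y n A0))
           (good_states V Y n A0 (mu_radius M) (cross_radius V M) (sqdev_radius V))"
proof -
  let ?good = "good_set V Y n A0 (mu_radius M) (cross_radius V M) (sqdev_radius V)"
  let ?p = "gibbs_density V a b0 Y n (centre_state Y n A0)"
  have "emeasure (gibbs_kernel V a b0 Y n (centre_state Y n A0))
          (good_states V Y n A0 (mu_radius M) (cross_radius V M) (sqdev_radius V))
      = (\<integral>\<^sup>+y. ennreal (?p y) * indicator (good_states V Y n A0 (mu_radius M) (cross_radius V M) (sqdev_radius V)) y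
           \<partial>state_space n)"
    unfolding gibbs_kernel_def by (rule emeasure_density) measurable
  also have "\<dots> = (\<integral>\<^sup>+y. ennreal (?p y) * indicator ?good (snd y) \<partial>state_space n)"
    by (intro nn_integral_cong) (auto simp: good_states_def Xset_def indicator_def gibbs_density_eq_0)
  also have "\<dots> = (\<integral>\<^sup>+z. ennreal (mu_theta_density V Y n (centre_state Y n A0) z) * indicator ?good z
                     \<partial>(lborel \<Otimes>\<^sub>M theta_space n))"
    using assms(2,3,6) by (intro nn_integral_gibbs_density_snd) measurable
  finally show ?thesis
    using centre_good_set_mass[OF assms(1,4,5,6,7)] by simp
qed

lemma emeasure_uniform_measure_superset:
  assumes "G \<subseteq> X" "G \<in> sets M" "X \<in> sets M" "emeasure M G \<noteq> 0" "emeasure M G \<noteq> \<infinity>"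
  shows "emeasure (uniform_measure M G) X = 1"
  using assms by (simp add: Int_absorb2 ennreal_divide_self less_top[symmetric])

lemma density_ge_scaled_uniform_measure:
  fixes p p0 :: "'a \<Rightarrow> ennreal"
  assumes [measurable]: "p \<in> borel_measurable M" "p0 \<in> borel_measurable M" "G \<in> sets M" "B \<in> sets M"
    and "0 \<le> c" and dom: "\<And>y. y \<in> G \<Longrightarrow> ennreal c * p0 y \<le> p y"
    and half: "ennreal (1 / 2) \<le> emeasure (density M p0) G"
  shows "ennreal (c / 2) * emeasure (uniform_measure (density M p0) G) B \<le> emeasure (density M p) B"
proof -
  have one: "1 \<le> 2 * emeasure (density M p0) G"
  proof -
    have "(1::ennreal) = 2 * ennreal (1 / 2)"
      by (subst ennreal_numeral[symmetric], subst ennreal_mult[symmetric]) simp_all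
    then show ?thesis
      using mult_left_mono[OF half, of 2] by simp
  qed
  have "emeasure (uniform_measure (density M p0) G) B \<le> 2 * emeasure (density M p0) (G \<inter> B)"
  proof (subst emeasure_uniform_measure)
    show "emeasure (density M p0) (G \<inter> B) / emeasure (density M p0) G \<le> 2 * emeasure (density M p0) (G \<inter> B)"
    proof (rule divide_le_posI_ennreal)
      show "0 < emeasure (density M p0) G"
        using one by (auto intro: gr_zeroI)
      show "emeasure (density M p0) (G \<inter> B) \<le> emeasure (density M p0) G * (2 * emeasure (density M p0) (G \<inter> B))"
        using mult_right_mono[OF one, of "emeasure (density M p0) (G \<inter> B)"] by (simp add: mult_ac)
    qed
  qed simp_all
  then have "ennreal (c / 2) * emeasure (uniform_measure (density M p0) G) B
      \<le> ennreal c * emeasure (density M p0) (G \<inter> B)"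
  proof -
    have "ennreal (c / 2) * 2 = ennreal c"
      using assms(5) by (subst ennreal_numeral[symmetric], subst ennreal_mult[symmetric]) simp_all
    then show ?thesis
      using mult_left_mono[OF \<open>emeasure _ B \<le> _\<close>, of "ennreal (c / 2)"] by (simp add: mult.assoc[symmetric])
  qed
  also have "\<dots> = (\<integral>\<^sup>+y. ennreal c * p0 y * indicator (G \<inter> B) y \<partial>M)"
    by (simp add: emeasure_density nn_integral_cmult mult.assoc)
  also have "\<dots> \<le> (\<integral>\<^sup>+y. p y * indicator B y \<partial>M)"
    using dom by (intro nn_integral_mono) (auto simp: indicator_def)
  also have "\<dots> = emeasure (density M p) B"
    by (simp add: emeasure_density)
  finally show ?thesis .
qed

lemma gibbs_kernel_prob_space:
  assumes "V > 0" "a > 0" "b0 > 0" "n \<ge> 1" "A > 0"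
  shows "prob_space (gibbs_kernel V a b0 Y n (A, \<mu>, \<theta>))"
proof (rule prob_spaceI)
  have "emeasure (gibbs_kernel V a b0 Y n (A, \<mu>, \<theta>)) (space (state_space n))
      = (\<integral>\<^sup>+y. ennreal (gibbs_density V a b0 Y n (A, \<mu>, \<theta>) y) * (\<lambda>_. 1) (snd y) \<partial>state_space n)"
    unfolding gibbs_kernel_def by (subst emeasure_density) (auto intro!: nn_integral_cong)
  also have "\<dots> = (\<integral>\<^sup>+\<mu>'. ennreal (normal_density (thetabar n \<theta>) (sqrt (A / n)) \<mu>') * 1 \<partial>lborel)"
    using assms nn_integral_gibbs_density_snd[where F = "\<lambda>_. 1" and x = "(A, \<mu>, \<theta>)"]
      nn_integral_mu_theta_density_fst[where f = "\<lambda>_. 1"]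
    by simp
  also have "\<dots> = 1"
    using assms by (simp add: nn_integral_normal_density)
  finally show "emeasure (gibbs_kernel V a b0 Y n (A, \<mu>, \<theta>)) (space (gibbs_kernel V a b0 Y n (A, \<mu>, \<theta>))) = 1"
    by (simp add: gibbs_kernel_def)
qed

lemma drift_le_bounds:
  assumes "drift V Y n (A, \<mu>, \<theta>) \<le> d"
  shows "real n * (thetabar n \<theta> - Ybar Y n)\<^sup>2 \<le> d"
    and "real n * ((Delta Y n / (real n - 1) - V) - A)\<^sup>2 \<le> d"
proof -
  have "0 \<le> real n * (thetabar n \<theta> - Ybar Y n)\<^sup>2" "0 \<le> real n * ((Delta Y n / (real n - 1) - V) - A)\<^sup>2"
    by simp_all
  then show "real n * (thetabar n \<theta> - Ybar Y n)\<^sup>2 \<le> d" "real n * ((Delta Y n / (real n - 1) - V) - A)\<^sup>2 \<le> d"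
    using assms unfolding drift_def prod.case by linarith+
qed

lemma centre_variance_bounds:
  assumes "V > 0" "\<delta> > 0" "n \<ge> 2" "Delta Y n / (real n - 1) \<le> M" "V + \<delta> \<le> Delta Y n / (real n - 1)"
  shows "\<delta> \<le> Delta Y n / (real n - 1) - V" "Delta Y n / (real n - 1) - V \<le> M"
    and "Delta Y n \<le> real n * M"
proof -
  show "\<delta> \<le> Delta Y n / (real n - 1) - V" "Delta Y n / (real n - 1) - V \<le> M"
    using assms by simp_all
  have "Delta Y n \<le> M * (real n - 1)"
    using assms(3,4) by (simp add: divide_le_eq)
  then show "Delta Y n \<le> real n * M"
    using assms by (simp add: algebra_simps)
qed

lemma gibbs_density_ge_centre:
  assumes "V > 0" "a > 0" "\<delta> > 0" "n \<ge> 1" "\<delta> \<le> A0" "A0 \<le> M" "Delta Y n \<le> real n * M"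
    and "4 * d / \<delta>\<^sup>2 \<le> real n" "real n * (A0 - A)\<^sup>2 \<le> d" "real n * (thetabar n \<theta> - Ybar Y n)\<^sup>2 \<le> d"
    and "y \<in> good_states V Y n A0 (mu_radius M) (cross_radius V M) (sqdev_radius V)"
  shows "exp (- ratio_bound V \<delta> (M + \<delta>) M d (mu_radius M) (cross_radius V M) (sqdev_radius V))
           * gibbs_density V a b0 Y n (centre_state Y n A0) y
         \<le> gibbs_density V a b0 Y n (A, \<mu>, \<theta>) y"
proof -
  have n: "real n > 0" using assms(4) by simp
  have "(A0 - A)\<^sup>2 \<le> d / real n"
    using assms(9) n by (simp add: pos_le_divide_eq mult.commute)
  also have "\<dots> \<le> (\<delta> / 2)\<^sup>2"
    using assms(3,8) n by (simp add: power_divide divide_le_eq mult.commute)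
  finally have "\<bar>A - A0\<bar> \<le> \<delta> / 2"
    using assms(3) abs_le_square_iff[of "A - A0" "\<delta> / 2"] by (simp add: power2_commute[of A])
  then have A: "\<delta> / 2 \<le> A" "A \<le> M + \<delta>"
    using assms(5,6) unfolding abs_le_iff by linarith+
  have "exp (- ratio_bound V \<delta> (M + \<delta>) M d (mu_radius M) (cross_radius V M) (sqdev_radius V))
          * mu_theta_density V Y n (centre_state Y n A0) (snd y)
        \<le> mu_theta_density V Y n (A, \<mu>, \<theta>) (snd y)"
    using assms(1,3-7,9-11) A
    by (intro mu_theta_density_ratio_ge)
       (auto simp: good_states_def power2_commute[of A] cross_radius_def sqdev_radius_def mu_radius_def)
  then show ?thesis
    using gibbs_density_factor[of V a b0 Y n _ "fst y" "snd y"] assms(2,4)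
    by (simp add: mult.assoc[symmetric] mult_right_mono ig_density_nonneg ig_shape_pos)
qed

lemma gibbs_kernel_minorization:
  assumes "V > 0" "a > 0" "b0 > 0" "\<delta> > 0" "n \<ge> 2"
    and "Delta Y n / (real n - 1) \<le> M" "V + \<delta> \<le> Delta Y n / (real n - 1)" "4 * d / \<delta>\<^sup>2 \<le> real n"
  defines "C \<equiv> ratio_bound V \<delta> (M + \<delta>) M d (mu_radius M) (cross_radius V M) (sqdev_radius V)"
  shows "\<exists>Q. prob_space Q \<and> sets Q = sets (state_space n) \<and> emeasure Q (Xset n) = 1 \<and>
           (\<forall>x\<in>Xset n. drift V Y n x \<le> d \<longrightarrow>
              (\<forall>B\<in>sets (state_space n).
                 emeasure (gibbs_kernel V a b0 Y n x) B \<ge> ennreal (exp (- C) / 2) * emeasure Q B))"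
proof -
  define A0 where "A0 = Delta Y n / (real n - 1) - V"
  let ?G = "good_states V Y n A0 (mu_radius M) (cross_radius V M) (sqdev_radius V)"
  let ?P0 = "gibbs_kernel V a b0 Y n (centre_state Y n A0)"
  have A0: "\<delta> \<le> A0" "A0 \<le> M" "Delta Y n \<le> real n * M"
    using centre_variance_bounds[OF assms(1,4-7)] unfolding A0_def by simp_all
  have n: "n \<ge> 1" using assms(5) by simp
  have half: "ennreal (1 / 2) \<le> emeasure ?P0 ?G"
    using assms(1-4) A0 n by (intro centre_kernel_good_mass) auto
  interpret P0: prob_space ?P0
    using assms(1-4) A0 n by (intro gibbs_kernel_prob_space) auto
  have G: "emeasure ?P0 ?G \<noteq> 0" "emeasure ?P0 ?G \<noteq> \<infinity>"
    using half by (auto simp: P0.emeasure_finite)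
  have "ennreal (exp (- C) / 2) * emeasure (uniform_measure ?P0 ?G) B \<le> emeasure (gibbs_kernel V a b0 Y n x) B"
    if "x \<in> Xset n" "drift V Y n x \<le> d" "B \<in> sets (state_space n)" for x B
  proof -
    obtain A \<mu> \<theta> where x: "x = (A, \<mu>, \<theta>)" by (cases x) auto
    have "ennreal (exp (- C)) * ennreal (gibbs_density V a b0 Y n (centre_state Y n A0) y)
        \<le> ennreal (gibbs_density V a b0 Y n x y)" if "y \<in> ?G" for y
      using assms(1,2,4,8) A0 n drift_le_bounds[OF \<open>drift V Y n x \<le> d\<close>[unfolded x]] that
      unfolding C_def x A0_def[symmetric]
      by (simp add: ennreal_mult[symmetric] gibbs_density_nonneg ennreal_leI gibbs_density_ge_centre)
    then show ?thesis
      unfolding gibbs_kernel_def using half that(3)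
      by (intro density_ge_scaled_uniform_measure) (auto simp: gibbs_kernel_def)
  qed
  moreover have "?G \<subseteq> Xset n"
    by (auto simp: good_states_def)
  then have "emeasure (uniform_measure ?P0 ?G) (Xset n) = 1"
    using G by (intro emeasure_uniform_measure_superset) (simp_all add: gibbs_kernel_def)
  ultimately show ?thesis
    using G by (intro exI[of _ "uniform_measure ?P0 ?G"]) (auto simp: gibbs_kernel_def prob_space_uniform_measure)
qed

theorem mainTheorem3:
  fixes V a b0 :: real and Y :: "nat \<Rightarrow> nat \<Rightarrow> real"
  assumes "V > 0" and "a > 0" and "b0 > 0"
    and assmA: "\<exists>\<delta> M N0. \<delta> > 0 \<and>
                 (\<forall>n\<ge>2. Delta Y n / (real n - 1) \<le> M) \<and>
                 (\<forall>n\<ge>max N0 2. Delta Y n / (real n - 1) \<ge> V + \<delta>)"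
  shows "\<forall>d>0. \<exists>\<epsilon>0>0. \<exists>N::nat. \<forall>n\<ge>N. n \<ge> 2 \<longrightarrow>
           (\<exists>Q. prob_space Q \<and> sets Q = sets (state_space n) \<and> emeasure Q (Xset n) = 1 \<and>
              (\<forall>x\<in>Xset n. drift V Y n x \<le> d \<longrightarrow>
                 (\<forall>B\<in>sets (state_space n).
                    emeasure (gibbs_kernel V a b0 Y n x) B \<ge> ennreal \<epsilon>0 * emeasure Q B)))"
proof (intro allI impI)
  fix d :: real
  assume "d > 0"
  obtain \<delta> M N0 where "\<delta> > 0" and "\<forall>n\<ge>2. Delta Y n / (real n - 1) \<le> M"
    and "\<forall>n\<ge>max N0 2. Delta Y n / (real n - 1) \<ge> V + \<delta>"
    using assmA by blast
  moreover have "4 * d / \<delta>\<^sup>2 \<le> real n" if "n \<ge> max (max N0 2) (nat \<lceil>4 * d / \<delta>\<^sup>2\<rceil>)" for n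
    using that by linarith
  ultimately show "\<exists>\<epsilon>0>0. \<exists>N::nat. \<forall>n\<ge>N. n \<ge> 2 \<longrightarrow>
           (\<exists>Q. prob_space Q \<and> sets Q = sets (state_space n) \<and> emeasure Q (Xset n) = 1 \<and>
              (\<forall>x\<in>Xset n. drift V Y n x \<le> d \<longrightarrow>
                 (\<forall>B\<in>sets (state_space n).
                    emeasure (gibbs_kernel V a b0 Y n x) B \<ge> ennreal \<epsilon>0 * emeasure Q B)))"
    using assms(1-3)
    by (intro exI[of _ "exp (- ratio_bound V \<delta> (M + \<delta>) M d (mu_radius M) (cross_radius V M) (sqdev_radius V)) / 2"]
        conjI exI[of _ "max (max N0 2) (nat \<lceil>4 * d / \<delta>\<^sup>2\<rceil>)"] allI impI gibbs_kernel_minorization)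
       auto
qed

end
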